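(* Every pseudo-mitotic group $\Gamma$ is boundedly acyclic, i.e. $\operatorname{H}^n_b(\Gamma;\mathbb{R}) \cong 0$ for all $n \geq 1$.
   Context: For a group $\Gamma$, the bounded cohomology $\operatorname{H}^*_b(\Gamma;\mathbb{R})$ is the cohomology of the complex $\operatorname{C}^n_b(\Gamma;\mathbb{R}) = \ell^\infty(\Gamma^{n+1})^\Gamma$ of bounded real functions on $\Gamma^{n+1}$ invariant under the diagonal action, with the homogeneous coboundary. A subgroup $H \leq \Gamma$ has a pseudo-mitosis in $\Gamma$ if there are homomorphisms $\psi_0,\psi_1\colon H \to \Gamma$ and an element $g \in \Gamma$ such that (1) $h\psi_1(h) = \psi_0(h)$ for all $h \in H$; (2) $[h,\psi_1(h')] = 1$ for all $h,h' \in H$; (3) $\psi_1(h) = g^{-1}\psi_0(h) g$ for all $h \in H$. A group is pseudo-mitotic (also called binate) if every finitely generated subgroup of it has a pseudo-mitosis in it. *)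

theory Defs
  imports "HOL-Algebra.Algebra"
begin

definition commutator :: "('a, 'b) monoid_scheme \<Rightarrow> 'a \<Rightarrow> 'a \<Rightarrow> 'a" where
  "commutator G x y = inv\<^bsub>G\<^esub> x \<otimes>\<^bsub>G\<^esub> inv\<^bsub>G\<^esub> y \<otimes>\<^bsub>G\<^esub> x \<otimes>\<^bsub>G\<^esub> y"

definition has_pseudo_mitosis :: "('a, 'b) monoid_scheme \<Rightarrow> 'a set \<Rightarrow> bool" where
  "has_pseudo_mitosis G H \<longleftrightarrow>
     (\<exists>\<psi>0 \<psi>1 g.
        \<psi>0 \<in> hom (G\<lparr>carrier := H\<rparr>) G \<and> \<psi>1 \<in> hom (G\<lparr>carrier := H\<rparr>) G \<and> g \<in> carrier G \<and>
        (\<forall>h\<in>H. h \<otimes>\<^bsub>G\<^esub> \<psi>1 h = \<psi>0 h) \<and>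
        (\<forall>h\<in>H. \<forall>h'\<in>H. commutator G h (\<psi>1 h') = \<one>\<^bsub>G\<^esub>) \<and>
        (\<forall>h\<in>H. \<psi>1 h = inv\<^bsub>G\<^esub> g \<otimes>\<^bsub>G\<^esub> \<psi>0 h \<otimes>\<^bsub>G\<^esub> g))"

text \<open>Finitely generated subgroups are exactly the subgroups generated by finite subsets.\<close>
definition pseudo_mitotic :: "('a, 'b) monoid_scheme \<Rightarrow> bool" where
  "pseudo_mitotic G \<longleftrightarrow>
     (\<forall>S. finite S \<and> S \<subseteq> carrier G \<longrightarrow> has_pseudo_mitosis G (generate G S))"

text \<open>An n-cochain is a real function on (n+1)-tuples (lists of length n+1) of group elements;
  only its values on such tuples matter.\<close>

definition tuples :: "('a, 'b) monoid_scheme \<Rightarrow> nat \<Rightarrow> 'a list set" where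
  "tuples G k = {xs. length xs = k \<and> set xs \<subseteq> carrier G}"

definition bounded_cochain :: "('a, 'b) monoid_scheme \<Rightarrow> nat \<Rightarrow> ('a list \<Rightarrow> real) \<Rightarrow> bool" where
  "bounded_cochain G n f \<longleftrightarrow> (\<exists>C. \<forall>xs\<in>tuples G (Suc n). \<bar>f xs\<bar> \<le> C)"

definition invariant_cochain :: "('a, 'b) monoid_scheme \<Rightarrow> nat \<Rightarrow> ('a list \<Rightarrow> real) \<Rightarrow> bool" where
  "invariant_cochain G n f \<longleftrightarrow>
     (\<forall>g\<in>carrier G. \<forall>xs\<in>tuples G (Suc n). f (map (\<lambda>x. g \<otimes>\<^bsub>G\<^esub> x) xs) = f xs)"

definition Cb :: "('a, 'b) monoid_scheme \<Rightarrow> nat \<Rightarrow> ('a list \<Rightarrow> real) set" where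
  "Cb G n = {f. bounded_cochain G n f \<and> invariant_cochain G n f}"

definition delete_at :: "nat \<Rightarrow> 'a list \<Rightarrow> 'a list" where
  "delete_at i xs = take i xs @ drop (Suc i) xs"

definition coboundary :: "('a list \<Rightarrow> real) \<Rightarrow> 'a list \<Rightarrow> real" where
  "coboundary f xs = (\<Sum>i<length xs. (-1) ^ i * f (delete_at i xs))"

definition bounded_cohomology_vanishes :: "('a, 'b) monoid_scheme \<Rightarrow> nat \<Rightarrow> bool" where
  "bounded_cohomology_vanishes G n \<longleftrightarrow>
     (\<forall>f\<in>Cb G n. (\<forall>xs\<in>tuples G (Suc (Suc n)). coboundary f xs = 0) \<longrightarrow>
        (\<exists>h\<in>Cb G (n - 1). \<forall>xs\<in>tuples G (Suc n). f xs = coboundary h xs))"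

definition boundedly_acyclic :: "('a, 'b) monoid_scheme \<Rightarrow> bool" where
  "boundedly_acyclic G \<longleftrightarrow> (\<forall>n\<ge>1. bounded_cohomology_vanishes G n)"

end

theory Submission
  imports Defs "HOL-Analysis.Analysis"
begin

text \<open>
  Let \<open>f\<close> be a bounded invariant \<open>n\<close>-cocycle. Restricted to a finitely generated subgroup \<open>H\<close>
  with pseudo-mitosis \<open>\<psi>\<^sub>0, \<psi>\<^sub>1, g\<close>, the map \<open>(h, k) \<mapsto> h \<psi>\<^sub>1(k)\<close> is multiplicative on \<open>H \<times> H\<close>,
  because \<open>\<psi>\<^sub>1(H)\<close> commutes with \<open>H\<close>, and it restricts to \<open>\<psi>\<^sub>0\<close> on the diagonal. Pulling \<open>f\<close>
  back along it gives a bicocycle on \<open>H \<times> H\<close> (the cross product), whose restriction to the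
  diagonal via an Alexander-Whitney map is cohomologous to \<open>\<psi>\<^sub>0\<^sup>* f\<close>. The mixed components of
  this bicocycle are cocycles of degree \<open>< n\<close>, and are killed one after the other, with
  primitives of controlled norm, by induction on the degree; what survives is
  \<open>f + \<psi>\<^sub>1\<^sup>* f\<close>. As \<open>\<psi>\<^sub>1\<close> is \<open>\<psi>\<^sub>0\<close> followed by conjugation with \<open>g\<close>, \<open>\<psi>\<^sub>0\<^sup>* f\<close> and
  \<open>\<psi>\<^sub>1\<^sup>* f\<close> are cohomologous as well, so \<open>f\<close> is a coboundary on \<open>H\<close>. All homotopies are explicit,
  so the primitive is bounded by a constant depending only on \<open>n\<close> times the norm of \<open>f\<close>, and it
  is invariant under a smaller finitely generated subgroup; this uniformity is what the
  induction needs. Finally, these primitives, one for every finitely generated subgroup, have a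
  cluster point in the compact space of functions bounded by that constant, and it is a global
  invariant primitive.
\<close>

section \<open>Faces and the homogeneous coboundary\<close>

lemma length_delete_at [simp]: "i < length xs \<Longrightarrow> length (delete_at i xs) = length xs - 1"
  by (simp add: delete_at_def)

lemma length_delete_at': "length (delete_at i xs) = (if i < length xs then length xs - 1 else length xs)"
  by (simp add: delete_at_def)

lemma delete_at_Cons_0 [simp]: "delete_at 0 (v # xs) = xs"
  by (simp add: delete_at_def)

lemma delete_at_Cons_Suc [simp]: "delete_at (Suc i) (v # xs) = v # delete_at i xs"
  by (simp add: delete_at_def)

lemma delete_at_not_Nil: "2 \<le> length xs \<Longrightarrow> i < length xs \<Longrightarrow> delete_at i xs \<noteq> []"
  by (auto simp flip: length_greater_0_conv)

lemma nth_delete_at: "i < length xs \<Longrightarrow> k < length xs - 1 \<Longrightarrow>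
   delete_at i xs ! k = (if k < i then xs ! k else xs ! Suc k)"
  by (auto simp: delete_at_def nth_append min_def)

lemma map_delete_at: "map f (delete_at i xs) = delete_at i (map f xs)"
  by (simp add: delete_at_def take_map drop_map)

lemma lists_delete_at: "xs \<in> lists A \<Longrightarrow> delete_at i xs \<in> lists A"
  unfolding delete_at_def by (auto dest: in_set_takeD in_set_dropD)

lemma delete_at_delete_at:
  assumes "i \<le> j" "Suc j < length xs"
  shows "delete_at j (delete_at i xs) = delete_at i (delete_at (Suc j) xs)"
proof (rule nth_equalityI)
  show "length (delete_at j (delete_at i xs)) = length (delete_at i (delete_at (Suc j) xs))"
    using assms by simp
  fix k assume "k < length (delete_at j (delete_at i xs))"
  then have "k < length xs - 2" using assms by simp
  then show "delete_at j (delete_at i xs) ! k = delete_at i (delete_at (Suc j) xs) ! k"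
    using assms by (simp add: nth_delete_at)
qed

lemma take_delete_at_le:
  "i \<le> p \<Longrightarrow> p < length s \<Longrightarrow> delete_at i (take (Suc p) s) = take p (delete_at i s)"
  by (simp add: delete_at_def take_append min_def take_drop)

lemma delete_at_drop:
  "p \<le> length s \<Longrightarrow> delete_at j (drop p s) = drop p (delete_at (p + j) s)"
  by (simp add: delete_at_def drop_append drop_take min_def add.commute)

lemma take_delete_at_greater: "p < k \<Longrightarrow> take (Suc p) (delete_at k s) = take (Suc p) s"
  by (simp add: delete_at_def take_append min_def)

lemma lists_take: "xs \<in> lists A \<Longrightarrow> take k xs \<in> lists A"
  by (auto dest: in_set_takeD)

lemma lists_drop: "xs \<in> lists A \<Longrightarrow> drop k xs \<in> lists A"
  by (auto dest: in_set_dropD)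

lemma hd_in_lists: "xs \<in> lists A \<Longrightarrow> xs \<noteq> [] \<Longrightarrow> hd xs \<in> A"
  by auto

lemma lists_mono_set: "A \<subseteq> A' \<Longrightarrow> xs \<in> lists A \<Longrightarrow> xs \<in> lists A'"
  by auto

lemma lists_map_mult: "subgroup H G \<Longrightarrow> x \<in> H \<Longrightarrow> xs \<in> lists H \<Longrightarrow> map ((\<otimes>\<^bsub>G\<^esub>) x) xs \<in> lists H"
  by (auto simp: subgroup.m_closed)

lemma faces_induct [case_names Nil faces]:
  assumes "P []"
    and "\<And>s. s \<noteq> [] \<Longrightarrow> (\<And>i. i < length s \<Longrightarrow> P (delete_at i s)) \<Longrightarrow> P s"
  shows "P s"
proof (induction "length s" arbitrary: s rule: less_induct)
  case less
  then show ?case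
    using assms by (cases "s = []") (auto simp: length_delete_at')
qed

lemma coboundary_singleton: "coboundary f [x] = f []"
  by (simp add: coboundary_def delete_at_def)

lemma coboundary_Cons: "coboundary f (v # xs) = f xs - coboundary (\<lambda>ys. f (v # ys)) xs"
proof -
  have "coboundary f (v # xs) = (\<Sum>i<Suc (length xs). (-1) ^ i * f (delete_at i (v # xs)))"
    by (simp add: coboundary_def)
  also have "\<dots> = f xs + (\<Sum>i<length xs. (-1) ^ Suc i * f (delete_at (Suc i) (v # xs)))"
    by (subst sum.lessThan_Suc_shift) simp
  also have "\<dots> = f xs - coboundary (\<lambda>ys. f (v # ys)) xs"
    by (simp add: coboundary_def sum_negf)
  finally show ?thesis .
qed

lemma coboundary_cong:
  assumes "\<And>i. i < length xs \<Longrightarrow> f (delete_at i xs) = g (delete_at i xs)"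
  shows "coboundary f xs = coboundary g xs"
  unfolding coboundary_def using assms by (intro sum.cong) auto

lemma coboundary_eq_0:
  "(\<And>i. i < length xs \<Longrightarrow> f (delete_at i xs) = 0) \<Longrightarrow> coboundary f xs = 0"
  unfolding coboundary_def by (intro sum.neutral) auto

lemma coboundary_diff: "coboundary (\<lambda>x. f x - g x) xs = coboundary f xs - coboundary g xs"
  by (simp add: coboundary_def sum_subtractf algebra_simps)

lemma coboundary_add: "coboundary (\<lambda>x. f x + g x) xs = coboundary f xs + coboundary g xs"
  by (simp add: coboundary_def sum.distrib algebra_simps)

lemma coboundary_scale: "coboundary (\<lambda>x. c * f x) xs = c * coboundary f xs"
  by (simp add: coboundary_def sum_distrib_left algebra_simps)

lemma coboundary_map: "coboundary (\<lambda>ys. f (map h ys)) xs = coboundary f (map h xs)"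
  by (simp add: coboundary_def map_delete_at)

lemma abs_coboundary_le:
  assumes "\<And>i. i < length xs \<Longrightarrow> \<bar>f (delete_at i xs)\<bar> \<le> M"
  shows "\<bar>coboundary f xs\<bar> \<le> real (length xs) * M"
proof -
  have "\<bar>coboundary f xs\<bar> \<le> (\<Sum>i<length xs. \<bar>(-1) ^ i * f (delete_at i xs)\<bar>)"
    unfolding coboundary_def by (rule sum_abs)
  also have "\<dots> \<le> (\<Sum>i<length xs. M)"
    by (intro sum_mono) (simp add: abs_mult assms)
  finally show ?thesis by simp
qed

lemma continuous_on_coboundary: "continuous_on UNIV (\<lambda>f :: 'a list \<Rightarrow> real. coboundary f xs)"
  unfolding coboundary_def by (intro continuous_intros continuous_on_product_coordinates)

lemma coboundary_coboundary: "coboundary (coboundary f) xs = 0"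
proof -
  define m where "m = length xs"
  define a where "a i j = (-1) ^ (i + j) * f (delete_at j (delete_at i xs))" for i j
  have "coboundary (coboundary f) xs = (\<Sum>i<m. \<Sum>j<m - 1. a i j)"
    unfolding coboundary_def a_def m_def
    by (intro sum.cong refl) (simp add: sum_distrib_left power_add mult.assoc)
  also have "\<dots> = (\<Sum>p\<in>{..<m} \<times> {..<m-1}. a (fst p) (snd p))"
    by (simp add: sum.cartesian_product case_prod_beta)
  also have "{..<m} \<times> {..<m-1} = {p. fst p \<le> snd p \<and> snd p < m - 1} \<union> {p. snd p < fst p \<and> fst p < m}"
    by auto
  also have "(\<Sum>p\<in>{p. fst p \<le> snd p \<and> snd p < m - 1} \<union> {p. snd p < fst p \<and> fst p < m}. a (fst p) (snd p))
      = (\<Sum>p\<in>{p. fst p \<le> snd p \<and> snd p < m - 1}. a (fst p) (snd p)) + (\<Sum>p\<in>{p. snd p < fst p \<and> fst p < m}. a (fst p) (snd p))"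
  proof (rule sum.union_disjoint)
    show "finite {p. fst p \<le> snd p \<and> snd p < m - 1}"
      by (rule finite_subset[of _ "{..<m} \<times> {..<m}"]) auto
    show "finite {p. snd p < fst p \<and> fst p < m}"
      by (rule finite_subset[of _ "{..<m} \<times> {..<m}"]) auto
  qed auto
  also have "(\<Sum>p\<in>{p. snd p < fst p \<and> fst p < m}. a (fst p) (snd p))
       = (\<Sum>p\<in>{p. fst p \<le> snd p \<and> snd p < m - 1}. - a (fst p) (snd p))"
  proof -
    have key: "a (Suc j) i = - a i j" if "i \<le> j" "j < m - 1" for i j
    proof -
      have "delete_at j (delete_at i xs) = delete_at i (delete_at (Suc j) xs)"
        using that by (intro delete_at_delete_at) (auto simp: m_def)
      then show ?thesis by (simp add: a_def add.commute)
    qed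
    have key': "a i j = - a j (i - 1)" if "j < i" "i < m" for i j
      using key[of j "i - 1"] that by simp
    show ?thesis
      by (rule sum.reindex_bij_witness[of _ "\<lambda>p. (Suc (snd p), fst p)" "\<lambda>p. (snd p, fst p - 1)"])
         (auto simp: key')
  qed
  finally show ?thesis by (simp add: sum_negf)
qed

section \<open>Bicochains\<close>

definition coboundary_fst :: "('a list \<Rightarrow> 'a list \<Rightarrow> real) \<Rightarrow> 'a list \<Rightarrow> 'a list \<Rightarrow> real" where
  "coboundary_fst B a b = coboundary (\<lambda>x. B x b) a"

definition coboundary_snd :: "('a list \<Rightarrow> 'a list \<Rightarrow> real) \<Rightarrow> 'a list \<Rightarrow> 'a list \<Rightarrow> real" where
  "coboundary_snd B a b = coboundary (B a) b"

definition total_coboundary :: "('a list \<Rightarrow> 'a list \<Rightarrow> real) \<Rightarrow> 'a list \<Rightarrow> 'a list \<Rightarrow> real" where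
  "total_coboundary B a b = coboundary_fst B a b + (-1) ^ Suc (length a) * coboundary_snd B a b"

lemma coboundary_fst_snd_commute:
  "coboundary_fst (coboundary_snd B) a b = coboundary_snd (coboundary_fst B) a b"
  unfolding coboundary_fst_def coboundary_snd_def coboundary_def
  by (simp add: sum_distrib_left sum.swap[of _ "{..<length a}"] mult.left_commute)

lemma total_coboundary_twice: "total_coboundary (total_coboundary B) a b = 0"
proof -
  have fst: "coboundary_fst (total_coboundary B) a b
      = coboundary_fst (coboundary_fst B) a b + (-1) ^ length a * coboundary_fst (coboundary_snd B) a b"
  proof -
    have "coboundary_fst (total_coboundary B) a b
        = coboundary (\<lambda>x. coboundary_fst B x b + (-1) ^ length a * coboundary_snd B x b) a"
      unfolding coboundary_fst_def[of "total_coboundary B"] total_coboundary_def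
      by (rule coboundary_cong) (cases "length a"; simp)
    then show ?thesis
      by (simp add: coboundary_add coboundary_scale coboundary_fst_def)
  qed
  have snd: "coboundary_snd (total_coboundary B) a b
      = coboundary_snd (coboundary_fst B) a b + (-1) ^ Suc (length a) * coboundary_snd (coboundary_snd B) a b"
    unfolding coboundary_snd_def[of "total_coboundary B"] total_coboundary_def
    by (simp only: coboundary_add coboundary_scale) (simp add: coboundary_snd_def[abs_def])
  have "coboundary_fst (coboundary_fst B) a b = 0"
    unfolding coboundary_fst_def using coboundary_coboundary[of "\<lambda>x. B x b" a] by simp
  moreover have "coboundary_snd (coboundary_snd B) a b = 0"
    unfolding coboundary_snd_def using coboundary_coboundary[of "B a" b] by simp
  ultimately show ?thesis
    unfolding total_coboundary_def[of "total_coboundary B"] fst snd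
    by (simp add: coboundary_fst_snd_commute)
qed

lemma total_coboundary_cong:
  assumes "\<And>i. i < length a \<Longrightarrow> B (delete_at i a) b = B' (delete_at i a) b"
      and "\<And>j. j < length b \<Longrightarrow> B a (delete_at j b) = B' a (delete_at j b)"
  shows "total_coboundary B a b = total_coboundary B' a b"
  unfolding total_coboundary_def coboundary_fst_def coboundary_snd_def
  by (subst coboundary_cong[where g = "\<lambda>x. B' x b"]) (use assms in \<open>auto intro: coboundary_cong\<close>)

lemma total_coboundary_eq_0:
  assumes "\<And>i. i < length a \<Longrightarrow> B (delete_at i a) b = 0"
      and "\<And>j. j < length b \<Longrightarrow> B a (delete_at j b) = 0"
  shows "total_coboundary B a b = 0"
  unfolding total_coboundary_def coboundary_fst_def coboundary_snd_def
  using assms by (simp add: coboundary_eq_0)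

lemma total_coboundary_diff:
  "total_coboundary (\<lambda>x y. B x y - B' x y) a b = total_coboundary B a b - total_coboundary B' a b"
  unfolding total_coboundary_def coboundary_fst_def coboundary_snd_def
  by (simp add: coboundary_diff algebra_simps)

lemma total_coboundary_map:
  "total_coboundary B (map f a) (map g b) = total_coboundary (\<lambda>x y. B (map f x) (map g y)) a b"
  unfolding total_coboundary_def coboundary_fst_def coboundary_snd_def coboundary_def
  by (simp add: map_delete_at)

lemma abs_total_coboundary_le:
  assumes "\<And>i. i < length a \<Longrightarrow> \<bar>B (delete_at i a) b\<bar> \<le> M"
      and "\<And>j. j < length b \<Longrightarrow> \<bar>B a (delete_at j b)\<bar> \<le> M"
  shows "\<bar>total_coboundary B a b\<bar> \<le> real (length a + length b) * M"
proof -
  have "\<bar>coboundary_fst B a b\<bar> \<le> real (length a) * M"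
    unfolding coboundary_fst_def by (rule abs_coboundary_le) (use assms in auto)
  moreover have "\<bar>coboundary_snd B a b\<bar> \<le> real (length b) * M"
    unfolding coboundary_snd_def by (rule abs_coboundary_le) (use assms in auto)
  moreover have "\<bar>total_coboundary B a b\<bar> \<le> \<bar>coboundary_fst B a b\<bar> + \<bar>coboundary_snd B a b\<bar>"
    using abs_triangle_ineq[of "coboundary_fst B a b" "(-1) ^ Suc (length a) * coboundary_snd B a b"]
    by (simp add: total_coboundary_def abs_mult)
  ultimately show ?thesis by (simp add: algebra_simps)
qed

text \<open>The Alexander-Whitney map, pulling a bicochain back to the diagonal: the front face
  \<open>s\<^sub>0 \<dots> s\<^sub>p\<close> and the back face \<open>s\<^sub>p \<dots> s\<^sub>m\<close> share the vertex \<open>s\<^sub>p\<close>.\<close>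
definition alexander_whitney :: "('a list \<Rightarrow> 'a list \<Rightarrow> real) \<Rightarrow> 'a list \<Rightarrow> real" where
  "alexander_whitney B s = (\<Sum>p<length s. B (take (Suc p) s) (drop p s))"

lemma alexander_whitney_cong:
  assumes "\<And>p. p < length s \<Longrightarrow> B (take (Suc p) s) (drop p s) = B' (take (Suc p) s) (drop p s)"
  shows "alexander_whitney B s = alexander_whitney B' s"
  unfolding alexander_whitney_def using assms by (intro sum.cong) auto

lemma alexander_whitney_diff:
  "alexander_whitney (\<lambda>x y. B x y - B' x y) s = alexander_whitney B s - alexander_whitney B' s"
  unfolding alexander_whitney_def by (simp add: sum_subtractf)

lemma alexander_whitney_map:
  "alexander_whitney B (map f s) = alexander_whitney (\<lambda>x y. B (map f x) (map f y)) s"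
  unfolding alexander_whitney_def by (simp add: take_map drop_map)

lemma abs_alexander_whitney_le:
  assumes "\<And>p. p < length s \<Longrightarrow> \<bar>B (take (Suc p) s) (drop p s)\<bar> \<le> M"
  shows "\<bar>alexander_whitney B s\<bar> \<le> real (length s) * M"
proof -
  have "\<bar>alexander_whitney B s\<bar> \<le> (\<Sum>p<length s. \<bar>B (take (Suc p) s) (drop p s)\<bar>)"
    unfolding alexander_whitney_def by (rule sum_abs)
  also have "\<dots> \<le> (\<Sum>p<length s. M)" by (intro sum_mono) (simp add: assms)
  finally show ?thesis by simp
qed

lemma coboundary_fst_alexander_whitney_term:
  assumes "p < length s"
  shows "coboundary_fst B (take (Suc p) s) (drop p s)
    = (\<Sum>i<p. (-1) ^ i * B (take p (delete_at i s)) (drop p s)) + (-1) ^ p * B (take p s) (drop p s)"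
proof -
  have "take p (delete_at p s) = take p s"
    using assms by (simp add: delete_at_def)
  then show ?thesis
    using assms by (simp add: coboundary_fst_def coboundary_def take_delete_at_le)
qed

lemma coboundary_snd_alexander_whitney_term:
  assumes "p < length s"
  shows "(-1) ^ p * coboundary_snd B (take (Suc p) s) (drop p s)
    = (-1) ^ p * B (take (Suc p) s) (drop (Suc p) s)
      + (\<Sum>k\<in>{Suc p..<length s}. (-1) ^ k * B (take (Suc p) (delete_at k s)) (drop p (delete_at k s)))"
proof -
  define N where "N = length s - Suc p"
  have "coboundary_snd B (take (Suc p) s) (drop p s)
      = (\<Sum>j<Suc N. (-1) ^ j * B (take (Suc p) s) (delete_at j (drop p s)))"
    using assms by (simp add: coboundary_snd_def coboundary_def N_def Suc_diff_Suc)
  also have "\<dots> = B (take (Suc p) s) (drop (Suc p) s)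
      + (\<Sum>j<N. (-1) ^ Suc j * B (take (Suc p) s) (delete_at (Suc j) (drop p s)))"
    by (subst sum.lessThan_Suc_shift) (simp add: delete_at_def drop_Suc tl_drop)
  also have "(\<Sum>j<N. (-1) ^ Suc j * B (take (Suc p) s) (delete_at (Suc j) (drop p s)))
      = (-1) ^ p * (\<Sum>j<N. (-1) ^ (j + Suc p) * B (take (Suc p) (delete_at (j + Suc p) s)) (drop p (delete_at (j + Suc p) s)))"
    unfolding sum_distrib_left
  proof (intro sum.cong refl)
    fix j
    have "(-1::real) ^ Suc j = (-1) ^ p * (-1) ^ (j + Suc p)"
      by (simp add: power_add power_mult_distrib[symmetric])
    then show "(-1) ^ Suc j * B (take (Suc p) s) (delete_at (Suc j) (drop p s))
      = (-1) ^ p * ((-1) ^ (j + Suc p) * B (take (Suc p) (delete_at (j + Suc p) s)) (drop p (delete_at (j + Suc p) s)))"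
      using assms by (simp add: delete_at_drop take_delete_at_greater add.commute)
  qed
  also have "(\<Sum>j<N. (-1) ^ (j + Suc p) * B (take (Suc p) (delete_at (j + Suc p) s)) (drop p (delete_at (j + Suc p) s)))
      = (\<Sum>k\<in>{Suc p..<length s}. (-1) ^ k * B (take (Suc p) (delete_at k s)) (drop p (delete_at k s)))"
    by (rule sum.reindex_bij_witness[of _ "\<lambda>k. k - Suc p" "\<lambda>j. j + Suc p"]) (auto simp: N_def)
  finally show ?thesis by (simp add: algebra_simps)
qed

lemma alexander_whitney_total_coboundary:
  assumes "\<And>b. B [] b = 0" and "\<And>a. B a [] = 0"
  shows "alexander_whitney (total_coboundary B) s = coboundary (alexander_whitney B) s"
proof -
  define m where "m = length s"
  define c where "c k q = (-1) ^ k * B (take (Suc q) (delete_at k s)) (drop q (delete_at k s))" for k q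
  define e where "e p = (-1) ^ p * B (take p s) (drop p s)" for p
  have "alexander_whitney (total_coboundary B) s
      = (\<Sum>p<m. coboundary_fst B (take (Suc p) s) (drop p s) + (-1) ^ p * coboundary_snd B (take (Suc p) s) (drop p s))"
    unfolding alexander_whitney_def total_coboundary_def m_def by (intro sum.cong refl) simp
  also have "\<dots> = (\<Sum>p<m. \<Sum>i<p. (-1) ^ i * B (take p (delete_at i s)) (drop p s))
      + (\<Sum>p<m. e p - e (Suc p)) + (\<Sum>p<m. \<Sum>k\<in>{Suc p..<m}. c k p)"
    by (simp add: coboundary_fst_alexander_whitney_term coboundary_snd_alexander_whitney_term m_def
        c_def e_def sum.distrib[symmetric] algebra_simps)
  also have "(\<Sum>p<m. e p - e (Suc p)) = 0"
    by (simp only: sum_lessThan_telescope') (simp add: e_def assms m_def)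
  also have "(\<Sum>p<m. \<Sum>i<p. (-1) ^ i * B (take p (delete_at i s)) (drop p s))
      = (\<Sum>q<m - 1. \<Sum>k<Suc q. c k q)"
  proof (cases m)
    case (Suc m')
    have "drop q (delete_at k s) = drop (Suc q) s" if "k < Suc q" "q < m'" for k q
      using that Suc by (simp add: delete_at_def drop_append m_def min_def)
    then show ?thesis
      using Suc by (simp only: sum.lessThan_Suc_shift) (simp add: c_def)
  qed simp
  also have "(\<Sum>p<m. \<Sum>k\<in>{Suc p..<m}. c k p) = (\<Sum>q<m - 1. \<Sum>k\<in>{Suc q..<m}. c k q)"
    by (cases m) (simp_all add: sum.lessThan_Suc)
  also have "(\<Sum>q<m - 1. \<Sum>k<Suc q. c k q) + 0 + (\<Sum>q<m - 1. \<Sum>k\<in>{Suc q..<m}. c k q) = (\<Sum>q<m - 1. \<Sum>k<m. c k q)"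
  proof -
    have "(\<Sum>k<Suc q. c k q) + (\<Sum>k\<in>{Suc q..<m}. c k q) = (\<Sum>k<m. c k q)" if "q < m - 1" for q
    proof -
      have "(\<Sum>k\<in>{..<Suc q} \<union> {Suc q..<m}. c k q) = (\<Sum>k<Suc q. c k q) + (\<Sum>k\<in>{Suc q..<m}. c k q)"
        by (rule sum.union_disjoint) auto
      moreover have "{..<Suc q} \<union> {Suc q..<m} = {..<m}" using that by auto
      ultimately show ?thesis by simp
    qed
    then show ?thesis by (simp add: sum.distrib[symmetric])
  qed
  also have "\<dots> = (\<Sum>k<m. \<Sum>q<m - 1. c k q)" by (rule sum.swap)
  also have "\<dots> = coboundary (alexander_whitney B) s"
    unfolding coboundary_def alexander_whitney_def m_def c_def
    by (intro sum.cong refl) (simp add: sum_distrib_left)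
  finally show ?thesis .
qed

section \<open>The cross product of a cochain\<close>

lemma list_pair_induct [case_names Nil1 Nil2 singleton1 singleton2 faces]:
  assumes "\<And>b. P [] b" and "\<And>a. P a []"
    and "\<And>x b. b \<noteq> [] \<Longrightarrow> P [x] b" and "\<And>a y. a \<noteq> [] \<Longrightarrow> P a [y]"
    and "\<And>a b. 2 \<le> length a \<Longrightarrow> 2 \<le> length b \<Longrightarrow>
      (\<And>i. i < length a \<Longrightarrow> P (delete_at i a) b) \<Longrightarrow> (\<And>j. j < length b \<Longrightarrow> P a (delete_at j b)) \<Longrightarrow> P a b"
  shows "P a b"
proof (induction "length a + length b" arbitrary: a b rule: less_induct)
  case less
  show ?case
  proof (cases "a = [] \<or> b = [] \<or> length a = 1 \<or> length b = 1")
    case True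
    then show ?thesis
      using assms(1-4) by (cases "a = []"; cases "b = []") (auto simp: length_Suc_conv)
  next
    case False
    then have "length a \<noteq> 0" "length b \<noteq> 0" "length a \<noteq> 1" "length b \<noteq> 1"
      by auto
    then have a: "2 \<le> length a" and b: "2 \<le> length b"
      by linarith+
    show ?thesis
    proof (rule assms(5)[OF a b])
      fix i assume "i < length a"
      then show "P (delete_at i a) b" using a by (intro less) auto
    next
      fix j assume "j < length b"
      then show "P a (delete_at j b)" using b by (intro less) auto
    qed
  qed
qed

text \<open>The pull-back of \<open>F\<close> along \<open>(x, y) \<mapsto> mul x (\<psi> y)\<close> as a bicochain, built as an iterated cone
  with apex \<open>mul (hd a) (\<psi> (hd b))\<close>.\<close>
function cross_bicochain ::
    "('a \<Rightarrow> 'a \<Rightarrow> 'a) \<Rightarrow> ('a \<Rightarrow> 'a) \<Rightarrow> ('a list \<Rightarrow> real) \<Rightarrow> 'a list \<Rightarrow> 'a list \<Rightarrow> real" where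
  "cross_bicochain mul \<psi> F a b = (if a = [] \<or> b = [] then 0
     else if length a = 1 then F (map (\<lambda>y. mul (hd a) (\<psi> y)) b)
     else if length b = 1 then F (map (\<lambda>x. mul x (\<psi> (hd b))) a)
     else (\<Sum>i<length a. (-1) ^ i * cross_bicochain mul \<psi> (\<lambda>xs. F (mul (hd a) (\<psi> (hd b)) # xs)) (delete_at i a) b)
        + (-1) ^ Suc (length a) *
          (\<Sum>j<length b. (-1) ^ j * cross_bicochain mul \<psi> (\<lambda>xs. F (mul (hd a) (\<psi> (hd b)) # xs)) a (delete_at j b)))"
  by pat_completeness auto
termination
  by (relation "Wellfounded.measure (\<lambda>(mul, \<psi>, F, a, b). length a + length b)") (auto simp: length_delete_at')

declare cross_bicochain.simps [simp del]

lemma cross_bicochain_Nil1 [simp]: "cross_bicochain mul \<psi> F [] b = 0"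
  and cross_bicochain_Nil2 [simp]: "cross_bicochain mul \<psi> F a [] = 0"
  by (simp_all add: cross_bicochain.simps)

lemma cross_bicochain_singleton1: "b \<noteq> [] \<Longrightarrow> cross_bicochain mul \<psi> F [x] b = F (map (\<lambda>y. mul x (\<psi> y)) b)"
  by (simp add: cross_bicochain.simps)

lemma cross_bicochain_singleton2: "a \<noteq> [] \<Longrightarrow> cross_bicochain mul \<psi> F a [y] = F (map (\<lambda>x. mul x (\<psi> y)) a)"
  by (cases a) (auto simp: cross_bicochain.simps)

lemma cross_bicochain_faces:
  assumes "2 \<le> length a" "2 \<le> length b"
  shows "cross_bicochain mul \<psi> F a b
    = total_coboundary (cross_bicochain mul \<psi> (\<lambda>xs. F (mul (hd a) (\<psi> (hd b)) # xs))) a b"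
  using assms
  by (subst cross_bicochain.simps) (auto simp: total_coboundary_def coboundary_fst_def coboundary_snd_def coboundary_def)

lemma cross_bicochain_diff:
  "cross_bicochain mul \<psi> (\<lambda>xs. F xs - F' xs) a b = cross_bicochain mul \<psi> F a b - cross_bicochain mul \<psi> F' a b"
proof (induction a b arbitrary: F F' rule: list_pair_induct)
  case (faces a b)
  define v where "v = mul (hd a) (\<psi> (hd b))"
  have "cross_bicochain mul \<psi> (\<lambda>xs. F xs - F' xs) a b
      = total_coboundary (\<lambda>x y. cross_bicochain mul \<psi> (\<lambda>xs. F (v # xs)) x y
          - cross_bicochain mul \<psi> (\<lambda>xs. F' (v # xs)) x y) a b"
    unfolding cross_bicochain_faces[OF faces.hyps] v_def[symmetric]
    by (rule total_coboundary_cong) (simp_all add: faces.IH)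
  then show ?case
    by (simp add: total_coboundary_diff cross_bicochain_faces[OF faces.hyps] v_def)
qed (simp_all add: cross_bicochain_singleton1 cross_bicochain_singleton2)

lemma cross_bicochain_coboundary:
  assumes "a \<noteq> []" "b \<noteq> []" "3 \<le> length a + length b"
  shows "cross_bicochain mul \<psi> (coboundary F) a b = total_coboundary (cross_bicochain mul \<psi> F) a b"
  using assms
proof (induction a b arbitrary: F rule: list_pair_induct)
  case (singleton1 x b)
  then have "2 \<le> length b" by simp
  then show ?case
    using singleton1 by (simp add: cross_bicochain_singleton1 delete_at_not_Nil total_coboundary_def
        coboundary_fst_def coboundary_snd_def coboundary_singleton coboundary_def map_delete_at)
next
  case (singleton2 a y)
  then have "2 \<le> length a" by simp
  then show ?case
    using singleton2 by (simp add: cross_bicochain_singleton2 delete_at_not_Nil total_coboundary_def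
        coboundary_fst_def coboundary_snd_def coboundary_singleton coboundary_def map_delete_at)
next
  case (faces a b)
  define v where "v = mul (hd a) (\<psi> (hd b))"
  define Fv where "Fv = (\<lambda>ys. F (v # ys))"
  have "(\<lambda>xs. coboundary F (v # xs)) = (\<lambda>xs. F xs - coboundary Fv xs)"
    by (simp add: coboundary_Cons Fv_def)
  then have "cross_bicochain mul \<psi> (coboundary F) a b
      = total_coboundary (cross_bicochain mul \<psi> (\<lambda>xs. F xs - coboundary Fv xs)) a b"
    by (simp add: cross_bicochain_faces[OF faces.hyps(1,2)] v_def)
  also have "\<dots> = total_coboundary (\<lambda>x y. cross_bicochain mul \<psi> F x y
      - total_coboundary (cross_bicochain mul \<psi> Fv) x y) a b"
    using faces.hyps by (intro total_coboundary_cong)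
      (simp_all add: cross_bicochain_diff faces.IH length_delete_at' flip: length_greater_0_conv)
  also have "\<dots> = total_coboundary (cross_bicochain mul \<psi> F) a b"
    by (simp add: total_coboundary_diff total_coboundary_twice)
  finally show ?case .
qed simp_all

lemma alexander_whitney_cross_diff:
  "alexander_whitney (cross_bicochain mul \<psi> (\<lambda>xs. F xs - F' xs)) s
    = alexander_whitney (cross_bicochain mul \<psi> F) s - alexander_whitney (cross_bicochain mul \<psi> F') s"
proof -
  have "cross_bicochain mul \<psi> (\<lambda>xs. F xs - F' xs) = (\<lambda>a b. cross_bicochain mul \<psi> F a b - cross_bicochain mul \<psi> F' a b)"
    by (intro ext) (rule cross_bicochain_diff)
  then show ?thesis by (simp add: alexander_whitney_diff)
qed

lemma alexander_whitney_cross_coboundary: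
  assumes "2 \<le> length s"
  shows "alexander_whitney (cross_bicochain mul \<psi> (coboundary F)) s
    = coboundary (alexander_whitney (cross_bicochain mul \<psi> F)) s"
proof -
  have "alexander_whitney (cross_bicochain mul \<psi> (coboundary F)) s
      = alexander_whitney (total_coboundary (cross_bicochain mul \<psi> F)) s"
    using assms by (intro alexander_whitney_cong cross_bicochain_coboundary) auto
  also have "\<dots> = coboundary (alexander_whitney (cross_bicochain mul \<psi> F)) s"
    by (rule alexander_whitney_total_coboundary) auto
  finally show ?thesis .
qed

lemma alexander_whitney_cross_singleton:
  "alexander_whitney (cross_bicochain mul \<psi> F) [x] = F [mul x (\<psi> x)]"
  by (simp add: alexander_whitney_def cross_bicochain_singleton1)

section \<open>Cone homotopies\<close>

text \<open>The cone construction with apex \<open>\<phi> (hd s)\<close>: a chain homotopy between the pull-back along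
  \<open>\<phi>\<close> and any chain map \<open>\<Psi>\<close> that agrees with a pull-back in degree \<open>0\<close>.\<close>
function cone_homotopy ::
    "('a \<Rightarrow> 'a) \<Rightarrow> (('a list \<Rightarrow> real) \<Rightarrow> 'a list \<Rightarrow> real) \<Rightarrow> ('a list \<Rightarrow> real) \<Rightarrow> 'a list \<Rightarrow> real" where
  "cone_homotopy \<phi> \<Psi> F s = (if s = [] then 0 else
     F (\<phi> (hd s) # map \<phi> s) - \<Psi> (\<lambda>xs. F (\<phi> (hd s) # xs)) s
     - (\<Sum>i<length s. (-1) ^ i * cone_homotopy \<phi> \<Psi> (\<lambda>xs. F (\<phi> (hd s) # xs)) (delete_at i s)))"
  by pat_completeness auto
termination
  by (relation "Wellfounded.measure (\<lambda>(\<phi>, \<Psi>, F, s). length s)") (auto simp: length_delete_at')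

declare cone_homotopy.simps [simp del]

lemma cone_homotopy_Nil [simp]: "cone_homotopy \<phi> \<Psi> F [] = 0"
  by (simp add: cone_homotopy.simps)

lemma cone_homotopy_not_Nil: "s \<noteq> [] \<Longrightarrow> cone_homotopy \<phi> \<Psi> F s =
     F (\<phi> (hd s) # map \<phi> s) - \<Psi> (\<lambda>xs. F (\<phi> (hd s) # xs)) s
     - coboundary (cone_homotopy \<phi> \<Psi> (\<lambda>xs. F (\<phi> (hd s) # xs))) s"
  by (subst cone_homotopy.simps) (simp add: coboundary_def)

lemma cone_homotopy_diff:
  assumes "\<And>F F' s. \<Psi> (\<lambda>xs. F xs - F' xs) s = \<Psi> F s - \<Psi> F' s"
  shows "cone_homotopy \<phi> \<Psi> (\<lambda>xs. F xs - F' xs) s = cone_homotopy \<phi> \<Psi> F s - cone_homotopy \<phi> \<Psi> F' s"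
proof (induction s arbitrary: F F' rule: faces_induct)
  case (faces s)
  define v where "v = \<phi> (hd s)"
  have "coboundary (cone_homotopy \<phi> \<Psi> (\<lambda>xs. F (v # xs) - F' (v # xs))) s
      = coboundary (\<lambda>t. cone_homotopy \<phi> \<Psi> (\<lambda>xs. F (v # xs)) t - cone_homotopy \<phi> \<Psi> (\<lambda>xs. F' (v # xs)) t) s"
    by (rule coboundary_cong) (rule faces.IH)
  then show ?case
    by (simp add: cone_homotopy_not_Nil[OF faces.hyps] v_def[symmetric] assms coboundary_diff)
qed simp

lemma cone_homotopy_eq:
  assumes lin: "\<And>F F' s. \<Psi> (\<lambda>xs. F xs - F' xs) s = \<Psi> F s - \<Psi> F' s"
      and chain: "\<And>F s. 2 \<le> length s \<Longrightarrow> \<Psi> (coboundary F) s = coboundary (\<Psi> F) s"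
      and degree_0: "\<And>F x. \<Psi> F [x] = F [\<phi>' x]"
      and "s \<noteq> []"
  shows "coboundary (cone_homotopy \<phi> \<Psi> F) s + cone_homotopy \<phi> \<Psi> (coboundary F) s = F (map \<phi> s) - \<Psi> F s"
  using \<open>s \<noteq> []\<close>
proof (induction s arbitrary: F rule: faces_induct)
  case (faces s)
  define Fv where "Fv = (\<lambda>ys. F (\<phi> (hd s) # ys))"
  have cone: "(\<lambda>xs. coboundary F (\<phi> (hd s) # xs)) = (\<lambda>xs. F xs - coboundary Fv xs)"
    by (simp add: coboundary_Cons Fv_def)
  show ?case
  proof (cases "length s = 1")
    case True
    then obtain x where "s = [x]" by (auto simp: length_Suc_conv)
    then show ?thesis
      by (simp add: cone_homotopy_not_Nil coboundary_singleton degree_0 coboundary_def delete_at_def)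
  next
    case False
    moreover have "length s \<noteq> 0" using faces.hyps by simp
    ultimately have s: "2 \<le> length s" by linarith
    have "cone_homotopy \<phi> \<Psi> (coboundary F) s = coboundary F (\<phi> (hd s) # map \<phi> s)
        - \<Psi> (\<lambda>xs. coboundary F (\<phi> (hd s) # xs)) s
        - coboundary (cone_homotopy \<phi> \<Psi> (\<lambda>xs. coboundary F (\<phi> (hd s) # xs))) s"
      using faces.prems by (simp add: cone_homotopy_not_Nil)
    also have "coboundary F (\<phi> (hd s) # map \<phi> s) = F (map \<phi> s) - coboundary (\<lambda>t. Fv (map \<phi> t)) s"
      by (simp add: coboundary_Cons Fv_def flip: coboundary_map)
    also have "\<Psi> (\<lambda>xs. coboundary F (\<phi> (hd s) # xs)) s = \<Psi> F s - coboundary (\<Psi> Fv) s"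
      by (simp add: cone lin chain[OF s])
    also have "coboundary (cone_homotopy \<phi> \<Psi> (\<lambda>xs. coboundary F (\<phi> (hd s) # xs))) s
       = coboundary (\<lambda>t. cone_homotopy \<phi> \<Psi> F t
           - (Fv (map \<phi> t) - \<Psi> Fv t - coboundary (cone_homotopy \<phi> \<Psi> Fv) t)) s"
    proof (rule coboundary_cong)
      fix i assume "i < length s"
      then have "delete_at i s \<noteq> []" by (rule delete_at_not_Nil[OF s])
      then show "cone_homotopy \<phi> \<Psi> (\<lambda>xs. coboundary F (\<phi> (hd s) # xs)) (delete_at i s)
          = cone_homotopy \<phi> \<Psi> F (delete_at i s) - (Fv (map \<phi> (delete_at i s)) - \<Psi> Fv (delete_at i s)
            - coboundary (cone_homotopy \<phi> \<Psi> Fv) (delete_at i s))"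
        using faces.IH[OF \<open>i < length s\<close>, of Fv] by (simp add: cone cone_homotopy_diff[OF lin])
    qed
    also have "\<dots> = coboundary (cone_homotopy \<phi> \<Psi> F) s
        - (coboundary (\<lambda>t. Fv (map \<phi> t)) s - coboundary (\<Psi> Fv) s)"
      by (simp add: coboundary_diff coboundary_coboundary)
    finally show ?thesis by simp
  qed
qed simp

lemma cone_homotopy_map_eq:
  "s \<noteq> [] \<Longrightarrow> coboundary (cone_homotopy \<phi> (\<lambda>F s. F (map \<phi>' s)) F) s
      + cone_homotopy \<phi> (\<lambda>F s. F (map \<phi>' s)) (coboundary F) s
    = F (map \<phi> s) - F (map \<phi>' s)"
  by (rule cone_homotopy_eq[where \<phi>' = \<phi>']) (simp_all add: coboundary_map)

lemma cone_homotopy_cross_eq: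
  "s \<noteq> [] \<Longrightarrow> coboundary (cone_homotopy \<phi> (\<lambda>F s. alexander_whitney (cross_bicochain mul \<psi> F) s) F) s
      + cone_homotopy \<phi> (\<lambda>F s. alexander_whitney (cross_bicochain mul \<psi> F) s) (coboundary F) s
    = F (map \<phi> s) - alexander_whitney (cross_bicochain mul \<psi> F) s"
  by (rule cone_homotopy_eq[where \<phi>' = "\<lambda>x. mul x (\<psi> x)"])
    (simp_all add: alexander_whitney_cross_diff alexander_whitney_cross_coboundary alexander_whitney_cross_singleton)

section \<open>Twisted multiplication by a commuting copy\<close>

lemma le_fact_mult: "0 \<le> c \<Longrightarrow> c \<le> fact k * (c :: real)"
  using fact_ge_1 by (metis mult_1 mult_right_mono)

text \<open>The data of a pseudo-mitosis of a subgroup \<open>L\<close> that make \<open>(x, y) \<mapsto> x \<psi>(y)\<close> a homomorphism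
  \<open>L \<times> L \<rightarrow> K\<close>.\<close>
locale commuting_twist = group G for G :: "('a, 'c) monoid_scheme" (structure) +
  fixes \<psi> :: "'a \<Rightarrow> 'a" and L K :: "'a set"
  assumes L_subset: "L \<subseteq> carrier G"
    and \<psi>_closed: "\<And>x. x \<in> L \<Longrightarrow> \<psi> x \<in> carrier G"
    and \<psi>_mult: "\<And>x y. x \<in> L \<Longrightarrow> y \<in> L \<Longrightarrow> \<psi> (x \<otimes> y) = \<psi> x \<otimes> \<psi> y"
    and \<psi>_commute: "\<And>x y. x \<in> L \<Longrightarrow> y \<in> L \<Longrightarrow> x \<otimes> \<psi> y = \<psi> y \<otimes> x"
    and twisted_mult_closed: "\<And>x y. x \<in> L \<Longrightarrow> y \<in> L \<Longrightarrow> x \<otimes> \<psi> y \<in> K"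
begin

lemma twisted_mult:
  assumes "x \<in> L" "a \<in> L" "y \<in> L" "b \<in> L"
  shows "(x \<otimes> a) \<otimes> \<psi> (y \<otimes> b) = (x \<otimes> \<psi> y) \<otimes> (a \<otimes> \<psi> b)"
proof -
  have c: "x \<in> carrier G" "a \<in> carrier G" "\<psi> y \<in> carrier G" "\<psi> b \<in> carrier G"
    using assms L_subset \<psi>_closed by auto
  have "(x \<otimes> a) \<otimes> \<psi> (y \<otimes> b) = x \<otimes> (a \<otimes> \<psi> y) \<otimes> \<psi> b"
    using c by (simp add: \<psi>_mult assms m_assoc)
  also have "\<dots> = x \<otimes> (\<psi> y \<otimes> a) \<otimes> \<psi> b"
    using \<psi>_commute[OF assms(2,3)] by simp
  also have "\<dots> = (x \<otimes> \<psi> y) \<otimes> (a \<otimes> \<psi> b)"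
    using c by (simp add: m_assoc)
  finally show ?thesis .
qed

lemma hd_twisted_mult_closed: "a \<in> lists L \<Longrightarrow> b \<in> lists L \<Longrightarrow> a \<noteq> [] \<Longrightarrow> b \<noteq> [] \<Longrightarrow> hd a \<otimes> \<psi> (hd b) \<in> K"
  by (intro twisted_mult_closed) auto

lemma cross_bicochain_eq_0:
  assumes "\<And>xs. xs \<in> lists K \<Longrightarrow> length xs = length a + length b - 1 \<Longrightarrow> F xs = 0"
      and "a \<in> lists L" "b \<in> lists L"
  shows "cross_bicochain (\<otimes>) \<psi> F a b = 0"
  using assms
proof (induction a b arbitrary: F rule: list_pair_induct)
  case (faces a b)
  then have "hd a \<otimes> \<psi> (hd b) \<in> K"
    by (intro hd_twisted_mult_closed) auto
  then show ?case
    using faces by (simp add: cross_bicochain_faces total_coboundary_eq_0 lists_delete_at length_delete_at')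
next
  case (singleton1 x b)
  then show ?case
    by (auto simp: cross_bicochain_singleton1 intro!: singleton1.prems(1) twisted_mult_closed)
next
  case (singleton2 a y)
  then show ?case
    by (auto simp: cross_bicochain_singleton2 intro!: singleton2.prems(1) twisted_mult_closed)
qed simp_all

lemma cross_bicochain_local:
  assumes "\<And>xs. xs \<in> lists K \<Longrightarrow> length xs = length a + length b - 1 \<Longrightarrow> F xs = F' xs"
      and "a \<in> lists L" "b \<in> lists L"
  shows "cross_bicochain (\<otimes>) \<psi> F a b = cross_bicochain (\<otimes>) \<psi> F' a b"
  using cross_bicochain_eq_0[where F = "\<lambda>xs. F xs - F' xs"] assms by (simp add: cross_bicochain_diff)

lemma abs_cross_bicochain_le:
  assumes "\<And>xs. xs \<in> lists K \<Longrightarrow> length xs = length a + length b - 1 \<Longrightarrow> \<bar>F xs\<bar> \<le> c"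
      and "0 \<le> c" and "a \<in> lists L" "b \<in> lists L"
  shows "\<bar>cross_bicochain (\<otimes>) \<psi> F a b\<bar> \<le> fact (length a + length b) * c"
  using assms
proof (induction a b arbitrary: F rule: list_pair_induct)
  case (singleton1 x b)
  then have "\<bar>cross_bicochain (\<otimes>) \<psi> F [x] b\<bar> \<le> c"
    by (auto simp: cross_bicochain_singleton1 intro!: singleton1.prems(1) twisted_mult_closed)
  also have "c \<le> fact (length [x] + length b) * c"
    using singleton1.prems by (intro le_fact_mult)
  finally show ?case .
next
  case (singleton2 a y)
  then have "\<bar>cross_bicochain (\<otimes>) \<psi> F a [y]\<bar> \<le> c"
    by (auto simp: cross_bicochain_singleton2 intro!: singleton2.prems(1) twisted_mult_closed)
  also have "c \<le> fact (length a + length [y]) * c"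
    using singleton2.prems by (intro le_fact_mult)
  finally show ?case .
next
  case (faces a b)
  define k where "k = length a + length b - 1"
  have k: "length a + length b = Suc k"
    using faces.hyps by (simp add: k_def)
  have "hd a \<otimes> \<psi> (hd b) \<in> K"
    using faces by (intro hd_twisted_mult_closed) auto
  then have "\<bar>cross_bicochain (\<otimes>) \<psi> F a b\<bar> \<le> real (length a + length b) * (fact k * c)"
    unfolding cross_bicochain_faces[OF faces.hyps]
    using faces by (intro abs_total_coboundary_le) (simp_all add: lists_delete_at length_delete_at' k_def)
  also have "\<dots> = fact (length a + length b) * c"
    by (simp only: k fact_Suc)
  finally show ?case .
qed (simp_all add: mult_nonneg_nonneg)

lemma cross_bicochain_translate:
  assumes "x \<in> L" "y \<in> L" "a \<in> lists L" "b \<in> lists L"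
  shows "cross_bicochain (\<otimes>) \<psi> F (map ((\<otimes>) x) a) (map ((\<otimes>) y) b)
       = cross_bicochain (\<otimes>) \<psi> (\<lambda>xs. F (map ((\<otimes>) (x \<otimes> \<psi> y)) xs)) a b"
  using assms(3,4)
proof (induction a b arbitrary: F rule: list_pair_induct)
  case (singleton1 a b)
  then show ?case
    using assms by (auto simp: cross_bicochain_singleton1 twisted_mult intro!: arg_cong[where f = F])
next
  case (singleton2 a b)
  then show ?case
    using assms by (auto simp: cross_bicochain_singleton2 twisted_mult intro!: arg_cong[where f = F])
next
  case (faces a b)
  define c where "c = x \<otimes> \<psi> y"
  define v where "v = hd a \<otimes> \<psi> (hd b)"
  have "hd (map ((\<otimes>) x) a) \<otimes> \<psi> (hd (map ((\<otimes>) y) b)) = c \<otimes> v"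
    using faces assms by (simp add: hd_map twisted_mult c_def v_def hd_in_lists flip: length_greater_0_conv)
  then have "cross_bicochain (\<otimes>) \<psi> F (map ((\<otimes>) x) a) (map ((\<otimes>) y) b)
      = total_coboundary (\<lambda>a' b'. cross_bicochain (\<otimes>) \<psi> (\<lambda>xs. F ((c \<otimes> v) # xs))
          (map ((\<otimes>) x) a') (map ((\<otimes>) y) b')) a b"
    using faces.hyps by (simp add: cross_bicochain_faces total_coboundary_map)
  also have "\<dots> = total_coboundary (cross_bicochain (\<otimes>) \<psi> (\<lambda>xs. F (map ((\<otimes>) c) (v # xs)))) a b"
    using faces by (intro total_coboundary_cong) (simp_all add: lists_delete_at c_def)
  also have "\<dots> = cross_bicochain (\<otimes>) \<psi> (\<lambda>xs. F (map ((\<otimes>) c) xs)) a b"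
    by (simp add: cross_bicochain_faces[OF faces.hyps] v_def)
  finally show ?case by (simp add: c_def)
qed simp_all

end

section \<open>Bounded equivariant cone homotopies\<close>

fun cone_homotopy_bound :: "(nat \<Rightarrow> real) \<Rightarrow> nat \<Rightarrow> real" where
  "cone_homotopy_bound P 0 = 0"
| "cone_homotopy_bound P (Suc k) = 1 + P (Suc k) + real (Suc k) * cone_homotopy_bound P k"

lemma cone_homotopy_bound_nonneg: "(\<And>k. 0 \<le> P k) \<Longrightarrow> 0 \<le> cone_homotopy_bound P k"
  by (induction k) auto

text \<open>Conditions on \<open>\<Psi>\<close> under which the cone homotopy is local, equivariant and bounded.\<close>
locale cone_operator = group G for G :: "('a, 'c) monoid_scheme" (structure) +
  fixes \<phi> :: "'a \<Rightarrow> 'a" and \<Psi> :: "('a list \<Rightarrow> real) \<Rightarrow> 'a list \<Rightarrow> real"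
    and L K :: "'a set" and P :: "nat \<Rightarrow> real"
  assumes \<phi>_closed: "\<And>x. x \<in> L \<Longrightarrow> \<phi> x \<in> K"
    and \<phi>_mult: "\<And>x y. x \<in> L \<Longrightarrow> y \<in> L \<Longrightarrow> \<phi> (x \<otimes> y) = \<phi> x \<otimes> \<phi> y"
    and \<Psi>_eq_0: "\<And>F s. (\<And>xs. xs \<in> lists K \<Longrightarrow> length xs = length s \<Longrightarrow> F xs = 0) \<Longrightarrow> s \<in> lists L \<Longrightarrow> \<Psi> F s = 0"
    and \<Psi>_diff: "\<And>F F' s. \<Psi> (\<lambda>xs. F xs - F' xs) s = \<Psi> F s - \<Psi> F' s"
    and \<Psi>_translate: "\<And>F s h. h \<in> L \<Longrightarrow> s \<in> lists L \<Longrightarrow>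
        \<Psi> F (map ((\<otimes>) h) s) = \<Psi> (\<lambda>xs. F (map ((\<otimes>) (\<phi> h)) xs)) s"
    and abs_\<Psi>_le: "\<And>F s c. 0 \<le> c \<Longrightarrow> (\<And>xs. xs \<in> lists K \<Longrightarrow> length xs = length s \<Longrightarrow> \<bar>F xs\<bar> \<le> c)
        \<Longrightarrow> s \<in> lists L \<Longrightarrow> \<bar>\<Psi> F s\<bar> \<le> P (length s) * c"
begin

lemma cone_homotopy_eq_0:
  assumes "\<And>xs. xs \<in> lists K \<Longrightarrow> length xs = Suc (length s) \<Longrightarrow> F xs = 0"
      and "s \<in> lists L"
  shows "cone_homotopy \<phi> \<Psi> F s = 0"
  using assms
proof (induction s arbitrary: F rule: faces_induct)
  case (faces s)
  then have v: "\<phi> (hd s) \<in> K"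
    by (auto intro!: \<phi>_closed)
  have "F (\<phi> (hd s) # map \<phi> s) = 0"
    using v faces.prems by (intro faces.prems(1)) (auto intro!: \<phi>_closed)
  moreover have "\<Psi> (\<lambda>xs. F (\<phi> (hd s) # xs)) s = 0"
    using v faces.prems by (intro \<Psi>_eq_0) (auto intro!: faces.prems(1))
  moreover have "coboundary (cone_homotopy \<phi> \<Psi> (\<lambda>xs. F (\<phi> (hd s) # xs))) s = 0"
    using v faces by (intro coboundary_eq_0 faces.IH)
      (auto simp: length_delete_at' lists_delete_at intro!: faces.prems(1))
  ultimately show ?case
    by (simp add: cone_homotopy_not_Nil[OF faces.hyps])
qed simp

lemma cone_homotopy_local:
  assumes "\<And>xs. xs \<in> lists K \<Longrightarrow> length xs = Suc (length s) \<Longrightarrow> F xs = F' xs"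
      and "s \<in> lists L"
  shows "cone_homotopy \<phi> \<Psi> F s = cone_homotopy \<phi> \<Psi> F' s"
  using cone_homotopy_eq_0[where F = "\<lambda>xs. F xs - F' xs"] assms
  by (simp add: cone_homotopy_diff[OF \<Psi>_diff])

lemma cone_homotopy_translate:
  assumes "h \<in> L" "s \<in> lists L"
  shows "cone_homotopy \<phi> \<Psi> F (map ((\<otimes>) h) s) = cone_homotopy \<phi> \<Psi> (\<lambda>xs. F (map ((\<otimes>) (\<phi> h)) xs)) s"
  using assms(2)
proof (induction s arbitrary: F rule: faces_induct)
  case (faces s)
  define c where "c = \<phi> h"
  define v where "v = \<phi> (hd s)"
  have hd: "\<phi> (hd (map ((\<otimes>) h) s)) = c \<otimes> v"
    using faces assms by (simp add: hd_map \<phi>_mult c_def v_def hd_in_lists)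
  have "map \<phi> (map ((\<otimes>) h) s) = map ((\<otimes>) c) (map \<phi> s)"
    using faces.prems assms by (auto simp: \<phi>_mult c_def)
  then have "F ((c \<otimes> v) # map \<phi> (map ((\<otimes>) h) s)) = F (map ((\<otimes>) c) (v # map \<phi> s))"
    by (simp only: list.map)
  moreover have "\<Psi> (\<lambda>xs. F ((c \<otimes> v) # xs)) (map ((\<otimes>) h) s) = \<Psi> (\<lambda>xs. F (map ((\<otimes>) c) (v # xs))) s"
    using \<Psi>_translate[OF assms(1) faces.prems] by (simp add: c_def)
  moreover have "coboundary (cone_homotopy \<phi> \<Psi> (\<lambda>xs. F ((c \<otimes> v) # xs))) (map ((\<otimes>) h) s)
      = coboundary (cone_homotopy \<phi> \<Psi> (\<lambda>xs. F (map ((\<otimes>) c) (v # xs)))) s"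
    using faces by (simp add: c_def lists_delete_at map_delete_at flip: coboundary_map cong: coboundary_cong)
  ultimately show ?case
    using faces.hyps hd by (simp add: cone_homotopy_not_Nil v_def c_def)
qed simp

lemma abs_cone_homotopy_le:
  assumes "\<And>xs. xs \<in> lists K \<Longrightarrow> length xs = Suc (length s) \<Longrightarrow> \<bar>F xs\<bar> \<le> c"
      and "0 \<le> c" and "s \<in> lists L"
  shows "\<bar>cone_homotopy \<phi> \<Psi> F s\<bar> \<le> cone_homotopy_bound P (length s) * c"
  using assms
proof (induction s arbitrary: F rule: faces_induct)
  case (faces s)
  then obtain k where k: "length s = Suc k"
    by (cases s) auto
  have v: "\<phi> (hd s) \<in> K"
    using faces by (auto intro!: \<phi>_closed)
  have "\<bar>cone_homotopy \<phi> \<Psi> F s\<bar> \<le> \<bar>F (\<phi> (hd s) # map \<phi> s)\<bar> + \<bar>\<Psi> (\<lambda>xs. F (\<phi> (hd s) # xs)) s\<bar>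
      + \<bar>coboundary (cone_homotopy \<phi> \<Psi> (\<lambda>xs. F (\<phi> (hd s) # xs))) s\<bar>"
    by (simp add: cone_homotopy_not_Nil[OF faces.hyps])
  moreover have "\<bar>F (\<phi> (hd s) # map \<phi> s)\<bar> \<le> c"
    using v faces.prems by (intro faces.prems(1)) (auto intro!: \<phi>_closed)
  moreover have "\<bar>\<Psi> (\<lambda>xs. F (\<phi> (hd s) # xs)) s\<bar> \<le> P (length s) * c"
    using v faces.prems by (intro abs_\<Psi>_le) (auto intro!: faces.prems(1))
  moreover have "\<bar>coboundary (cone_homotopy \<phi> \<Psi> (\<lambda>xs. F (\<phi> (hd s) # xs))) s\<bar>
      \<le> real (length s) * (cone_homotopy_bound P k * c)"
    using v faces k by (intro abs_coboundary_le)
      (auto simp: length_delete_at' lists_delete_at intro!: faces.IH[THEN order_trans] faces.prems(1))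
  ultimately have "\<bar>cone_homotopy \<phi> \<Psi> F s\<bar> \<le> c + P (length s) * c + real (length s) * (cone_homotopy_bound P k * c)"
    by linarith
  then show ?case
    using k by (simp add: algebra_simps)
qed simp

lemma cone_homotopy_invariant:
  assumes "\<And>k xs. k \<in> K \<Longrightarrow> xs \<in> lists K \<Longrightarrow> length xs = Suc (length s) \<Longrightarrow> F (map ((\<otimes>) k) xs) = F xs"
      and "h \<in> L" "s \<in> lists L"
  shows "cone_homotopy \<phi> \<Psi> F (map ((\<otimes>) h) s) = cone_homotopy \<phi> \<Psi> F s"
proof -
  have "cone_homotopy \<phi> \<Psi> F (map ((\<otimes>) h) s) = cone_homotopy \<phi> \<Psi> (\<lambda>xs. F (map ((\<otimes>) (\<phi> h)) xs)) s"
    by (rule cone_homotopy_translate[OF assms(2,3)])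
  also have "\<dots> = cone_homotopy \<phi> \<Psi> F s"
    using assms \<phi>_closed by (intro cone_homotopy_local) auto
  finally show ?thesis .
qed

end

locale mitosis_data = commuting_twist G \<psi>1 L K for G :: "('a, 'c) monoid_scheme" (structure) and \<psi>1 L K +
  fixes \<psi>0 :: "'a \<Rightarrow> 'a" and g :: 'a
  assumes L_subgroup: "subgroup L G" and K_subgroup: "subgroup K G"
    and \<psi>0_eq: "\<And>x. x \<in> L \<Longrightarrow> \<psi>0 x = x \<otimes> \<psi>1 x"
    and g_in_K: "g \<in> K"
    and g_conj: "\<And>x. x \<in> L \<Longrightarrow> \<psi>0 x \<otimes> g = g \<otimes> \<psi>1 x"
begin

lemma \<psi>1_one: "\<psi>1 \<one> = \<one>"
proof -
  have "\<one> \<in> L" "\<psi>1 \<one> \<in> carrier G"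
    using L_subgroup \<psi>_closed by (auto intro: subgroup.one_closed)
  moreover have "\<psi>1 \<one> \<otimes> \<psi>1 \<one> = \<psi>1 (\<one> \<otimes> \<one>)"
    using calculation by (simp only: \<psi>_mult)
  ultimately show ?thesis
    using l_cancel[of "\<psi>1 \<one>" "\<psi>1 \<one>" \<one>] by simp
qed

lemma L_subset_K: "x \<in> L \<Longrightarrow> x \<in> K"
  using twisted_mult_closed[of x \<one>] L_subgroup L_subset by (auto simp: \<psi>1_one subgroup.one_closed)

lemma \<psi>1_in_K: "x \<in> L \<Longrightarrow> \<psi>1 x \<in> K"
  using twisted_mult_closed[of \<one> x] L_subgroup \<psi>_closed by (simp add: subgroup.one_closed)

lemma \<psi>0_closed: "x \<in> L \<Longrightarrow> \<psi>0 x \<in> K"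
  by (simp add: \<psi>0_eq twisted_mult_closed)

lemma \<psi>0_mult: "x \<in> L \<Longrightarrow> y \<in> L \<Longrightarrow> \<psi>0 (x \<otimes> y) = \<psi>0 x \<otimes> \<psi>0 y"
  using L_subgroup by (simp add: \<psi>0_eq subgroup.m_closed twisted_mult)

sublocale cross: cone_operator G \<psi>0 "\<lambda>F s. alexander_whitney (cross_bicochain (\<otimes>) \<psi>1 F) s" L K
    "\<lambda>k. real k * fact (Suc k)"
proof unfold_locales
  fix F :: "'a list \<Rightarrow> real" and s
  assume "\<And>xs. xs \<in> lists K \<Longrightarrow> length xs = length s \<Longrightarrow> F xs = 0" and "s \<in> lists L"
  then show "alexander_whitney (cross_bicochain (\<otimes>) \<psi>1 F) s = 0"
    unfolding alexander_whitney_def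
    by (intro sum.neutral ballI cross_bicochain_eq_0) (auto simp: lists_take lists_drop)
next
  fix F :: "'a list \<Rightarrow> real" and s h
  assume "h \<in> L" and "s \<in> lists L"
  then have "alexander_whitney (cross_bicochain (\<otimes>) \<psi>1 F) (map ((\<otimes>) h) s)
      = alexander_whitney (cross_bicochain (\<otimes>) \<psi>1 (\<lambda>xs. F (map ((\<otimes>) (h \<otimes> \<psi>1 h)) xs))) s"
    unfolding alexander_whitney_map
    by (intro alexander_whitney_cong cross_bicochain_translate) (auto simp: lists_take lists_drop)
  then show "alexander_whitney (cross_bicochain (\<otimes>) \<psi>1 F) (map ((\<otimes>) h) s)
      = alexander_whitney (cross_bicochain (\<otimes>) \<psi>1 (\<lambda>xs. F (map ((\<otimes>) (\<psi>0 h)) xs))) s"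
    using \<open>h \<in> L\<close> by (simp add: \<psi>0_eq)
next
  fix F :: "'a list \<Rightarrow> real" and s and c :: real
  assume "0 \<le> c" and bound: "\<And>xs. xs \<in> lists K \<Longrightarrow> length xs = length s \<Longrightarrow> \<bar>F xs\<bar> \<le> c"
     and "s \<in> lists L"
  have "\<bar>alexander_whitney (cross_bicochain (\<otimes>) \<psi>1 F) s\<bar> \<le> real (length s) * (fact (Suc (length s)) * c)"
  proof (rule abs_alexander_whitney_le)
    fix p assume "p < length s"
    then show "\<bar>cross_bicochain (\<otimes>) \<psi>1 F (take (Suc p) s) (drop p s)\<bar> \<le> fact (Suc (length s)) * c"
      using abs_cross_bicochain_le[of "take (Suc p) s" "drop p s" F c] \<open>0 \<le> c\<close> \<open>s \<in> lists L\<close>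
      by (simp add: bound lists_take lists_drop)
  qed
  then show "\<bar>alexander_whitney (cross_bicochain (\<otimes>) \<psi>1 F) s\<bar> \<le> real (length s) * fact (Suc (length s)) * c"
    by (simp add: mult.assoc)
qed (simp_all add: \<psi>0_closed \<psi>0_mult alexander_whitney_cross_diff)

sublocale conj: cone_operator G \<psi>0 "\<lambda>F s. F (map (\<lambda>x. \<psi>0 x \<otimes> g) s)" L K "\<lambda>k. 1"
proof unfold_locales
  fix F :: "'a list \<Rightarrow> real" and s h
  assume "h \<in> L" and "s \<in> lists L"
  then show "F (map (\<lambda>x. \<psi>0 x \<otimes> g) (map ((\<otimes>) h) s)) = F (map ((\<otimes>) (\<psi>0 h)) (map (\<lambda>x. \<psi>0 x \<otimes> g) s))"
    using g_in_K K_subgroup \<psi>0_closed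
    by (auto simp: \<psi>0_mult m_assoc subgroup.mem_carrier intro!: arg_cong[where f = F])
next
  fix F :: "'a list \<Rightarrow> real" and s
  assume F: "\<And>xs. xs \<in> lists K \<Longrightarrow> length xs = length s \<Longrightarrow> F xs = 0" and "s \<in> lists L"
  then show "F (map (\<lambda>x. \<psi>0 x \<otimes> g) s) = 0"
    by (intro F) (auto simp: \<psi>0_closed subgroup.m_closed[OF K_subgroup] g_in_K)
next
  fix F :: "'a list \<Rightarrow> real" and s and c :: real
  assume F: "\<And>xs. xs \<in> lists K \<Longrightarrow> length xs = length s \<Longrightarrow> \<bar>F xs\<bar> \<le> c" and "s \<in> lists L"
  then show "\<bar>F (map (\<lambda>x. \<psi>0 x \<otimes> g) s)\<bar> \<le> 1 * c"
    by (simp, intro F) (auto simp: \<psi>0_closed subgroup.m_closed[OF K_subgroup] g_in_K)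
qed (simp_all add: \<psi>0_closed \<psi>0_mult)

end

section \<open>Killing the mixed components of a bicocycle\<close>

definition bounded_invariant_primitive ::
    "('a, 'c) monoid_scheme \<Rightarrow> nat \<Rightarrow> real \<Rightarrow> 'a set \<Rightarrow> ('a list \<Rightarrow> real) \<Rightarrow> real \<Rightarrow> ('a list \<Rightarrow> real) \<Rightarrow> bool" where
  "bounded_invariant_primitive G q C K \<phi> c b \<longleftrightarrow>
     (\<forall>xs\<in>lists K. length xs = q \<longrightarrow> \<bar>b xs\<bar> \<le> C * c) \<and>
     (\<forall>k\<in>K. \<forall>xs\<in>lists K. length xs = q \<longrightarrow> b (map ((\<otimes>\<^bsub>G\<^esub>) k) xs) = b xs) \<and>
     (\<forall>xs\<in>lists K. length xs = Suc q \<longrightarrow> \<phi> xs = coboundary b xs)"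

definition uniform_primitives :: "('a, 'c) monoid_scheme \<Rightarrow> nat \<Rightarrow> real \<Rightarrow> 'a set \<Rightarrow> 'a set \<Rightarrow> bool" where
  "uniform_primitives G q C K K' \<longleftrightarrow> (\<forall>\<phi> c. 0 \<le> c \<longrightarrow>
     (\<forall>xs\<in>lists K'. length xs = Suc q \<longrightarrow> \<bar>\<phi> xs\<bar> \<le> c) \<longrightarrow>
     (\<forall>k\<in>K'. \<forall>xs\<in>lists K'. length xs = Suc q \<longrightarrow> \<phi> (map ((\<otimes>\<^bsub>G\<^esub>) k) xs) = \<phi> xs) \<longrightarrow>
     (\<forall>xs\<in>lists K'. length xs = Suc (Suc q) \<longrightarrow> coboundary \<phi> xs = 0) \<longrightarrow>
     (\<exists>b. bounded_invariant_primitive G q C K \<phi> c b))"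

fun reduced_bound :: "nat \<Rightarrow> (nat \<Rightarrow> real) \<Rightarrow> nat \<Rightarrow> real" where
  "reduced_bound n C 0 = 1"
| "reduced_bound n C (Suc p) = reduced_bound n C p * (1 + real (n + 2) * C (n - 1 - p))"

fun edge_bound :: "nat \<Rightarrow> (nat \<Rightarrow> real) \<Rightarrow> nat \<Rightarrow> real" where
  "edge_bound n C 0 = 0"
| "edge_bound n C (Suc p) = edge_bound n C p + C (n - 1 - p) * reduced_bound n C p"

fun diagonal_bound :: "nat \<Rightarrow> (nat \<Rightarrow> real) \<Rightarrow> nat \<Rightarrow> real" where
  "diagonal_bound n C 0 = 0"
| "diagonal_bound n C (Suc p) = diagonal_bound n C p + real n * C (n - 1 - p) * reduced_bound n C p"

lemma reduced_bound_nonneg: "(\<And>q. 0 \<le> C q) \<Longrightarrow> 0 \<le> reduced_bound n C p"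
  by (induction p) auto

lemma edge_bound_nonneg: "(\<And>q. 0 \<le> C q) \<Longrightarrow> 0 \<le> edge_bound n C p"
  by (induction p) (auto intro!: add_nonneg_nonneg mult_nonneg_nonneg reduced_bound_nonneg)

lemma diagonal_bound_nonneg: "(\<And>q. 0 \<le> C q) \<Longrightarrow> 0 \<le> diagonal_bound n C p"
  by (induction p) (auto intro!: add_nonneg_nonneg mult_nonneg_nonneg reduced_bound_nonneg)

text \<open>The mixed components of the bicocycle \<open>B\<close> are killed one first degree at a time, using the
  uniform primitives along the chain \<open>M 0 \<subseteq> \<dots> \<subseteq> M (n - 1) \<subseteq> L\<close>; \<open>edge_correction\<close> and
  \<open>diagonal_correction\<close> keep track of how the components \<open>B' a [y]\<close> and the Alexander-Whitney
  diagonal have changed.\<close>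
locale bicocycle_reduction = group G for G :: "('a, 'c) monoid_scheme" (structure) +
  fixes n :: nat and M :: "nat \<Rightarrow> 'a set" and L :: "'a set"
    and C :: "nat \<Rightarrow> real" and B :: "'a list \<Rightarrow> 'a list \<Rightarrow> real" and c :: real
  assumes n_ge_1: "1 \<le> n"
    and M_subgroup: "\<And>q. subgroup (M q) G" and M_Suc: "\<And>q. M q \<subseteq> M (Suc q)"
    and L_subgroup: "subgroup L G" and M_L: "M (n - 1) \<subseteq> L"
    and primitives: "\<And>q. 1 \<le> q \<Longrightarrow> q \<le> n - 1 \<Longrightarrow> uniform_primitives G q (C q) (M (q - 1)) (M q)"
    and C_nonneg: "\<And>q. 0 \<le> C q" and c_nonneg: "0 \<le> c"
    and B_Nil1: "\<And>t. B [] t = 0" and B_Nil2: "\<And>a. B a [] = 0"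
    and B_cocycle: "\<And>a t. a \<in> lists L \<Longrightarrow> t \<in> lists L \<Longrightarrow> a \<noteq> [] \<Longrightarrow> t \<noteq> [] \<Longrightarrow>
      length a + length t = n + 3 \<Longrightarrow> total_coboundary B a t = 0"
    and B_invariant1: "\<And>x a t. x \<in> L \<Longrightarrow> a \<in> lists L \<Longrightarrow> t \<in> lists L \<Longrightarrow> B (map ((\<otimes>) x) a) t = B a t"
    and B_invariant2: "\<And>y a t. y \<in> L \<Longrightarrow> a \<in> lists L \<Longrightarrow> t \<in> lists L \<Longrightarrow> B a (map ((\<otimes>) y) t) = B a t"
    and abs_B_le: "\<And>a t. a \<in> lists L \<Longrightarrow> t \<in> lists L \<Longrightarrow> length a + length t = n + 2 \<Longrightarrow> \<bar>B a t\<bar> \<le> c"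
begin

lemma M_mono: "i \<le> j \<Longrightarrow> M i \<subseteq> M j"
  by (rule lift_Suc_mono_le[of M]) (use M_Suc in auto)

lemma M_subset_L: "j \<le> n - 1 \<Longrightarrow> M j \<subseteq> L"
  using M_mono M_L by blast

definition edge_correction :: "nat \<Rightarrow> ('a list \<Rightarrow> 'a list \<Rightarrow> real) \<Rightarrow> ('a list \<Rightarrow> real) \<Rightarrow> bool" where
  "edge_correction p B' w \<longleftrightarrow>
     (\<forall>a\<in>lists L. \<forall>y\<in>M (n - 1 - p). length a = Suc n \<longrightarrow> B' a [y] = B a [y] - coboundary w a) \<and>
     (\<forall>h\<in>L. \<forall>a\<in>lists L. length a = n \<longrightarrow> w (map ((\<otimes>) h) a) = w a) \<and>
     (\<forall>a\<in>lists L. length a = n \<longrightarrow> \<bar>w a\<bar> \<le> edge_bound n C p * c)"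

definition diagonal_correction :: "nat \<Rightarrow> ('a list \<Rightarrow> 'a list \<Rightarrow> real) \<Rightarrow> ('a list \<Rightarrow> real) \<Rightarrow> bool" where
  "diagonal_correction p B' E \<longleftrightarrow>
     (\<forall>\<sigma>\<in>lists (M 0). length \<sigma> = Suc n \<longrightarrow> alexander_whitney B \<sigma> = alexander_whitney B' \<sigma> + coboundary E \<sigma>) \<and>
     (\<forall>h\<in>M 0. \<forall>\<tau>\<in>lists (M 0). length \<tau> = n \<longrightarrow> E (map ((\<otimes>) h) \<tau>) = E \<tau>) \<and>
     (\<forall>\<tau>\<in>lists (M 0). length \<tau> = n \<longrightarrow> \<bar>E \<tau>\<bar> \<le> diagonal_bound n C p * c)"

end

text \<open>Stage \<open>p\<close> of the reduction: the components of \<open>B'\<close> with first tuple of length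
  \<open>2, \<dots>, p + 1\<close> vanish on tuples from \<open>M (n - 1 - p)\<close>.\<close>
locale reduced_bicochain = bicocycle_reduction +
  fixes p :: nat and B' :: "'a list \<Rightarrow> 'a list \<Rightarrow> real"
  assumes B'_Nil1: "\<And>t. B' [] t = 0" and B'_Nil2: "\<And>a. B' a [] = 0"
    and total_coboundary_B': "\<And>a t. total_coboundary B' a t = total_coboundary B a t"
    and B'_invariant1: "\<And>x a t. x \<in> L \<Longrightarrow> a \<in> lists L \<Longrightarrow> t \<in> lists L \<Longrightarrow> B' (map ((\<otimes>) x) a) t = B' a t"
    and B'_invariant2: "\<And>y a t. y \<in> M (n - 1 - p) \<Longrightarrow> a \<in> lists L \<Longrightarrow> t \<in> lists (M (n - 1 - p)) \<Longrightarrow>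
      B' a (map ((\<otimes>) y) t) = B' a t"
    and B'_reduced: "\<And>a t. a \<in> lists L \<Longrightarrow> t \<in> lists (M (n - 1 - p)) \<Longrightarrow> 2 \<le> length a \<Longrightarrow> length a \<le> Suc p \<Longrightarrow>
      length a + length t = n + 2 \<Longrightarrow> B' a t = 0"
    and B'_singleton: "\<And>x t. B' [x] t = B [x] t"
    and abs_B'_le: "\<And>a t. a \<in> lists L \<Longrightarrow> t \<in> lists L \<Longrightarrow> length a + length t = n + 2 \<Longrightarrow>
      \<bar>B' a t\<bar> \<le> reduced_bound n C p * c"

lemma (in bicocycle_reduction) reduction_stage_0:
  "reduced_bicochain G n M L C B c 0 B \<and> edge_correction 0 B (\<lambda>_. 0) \<and> diagonal_correction 0 B (\<lambda>_. 0)"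
proof (intro conjI)
  show "reduced_bicochain G n M L C B c 0 B"
    using B_Nil1 B_Nil2 B_invariant1 abs_B_le M_L by unfold_locales (auto intro!: B_invariant2)
qed (use B_Nil1 in \<open>auto simp: edge_correction_def diagonal_correction_def coboundary_def B_invariant1\<close>)

context reduced_bicochain
begin

text \<open>Cutting \<open>B' a\<close> down to \<open>M (n - 1 - p)\<close> makes the slice, and hence its chosen primitive,
  invariant under translating \<open>a\<close> (\<open>correction_invariant1\<close>).\<close>
definition slice :: "'a list \<Rightarrow> 'a list \<Rightarrow> real" where
  "slice a t = (if t \<in> lists (M (n - 1 - p)) then B' a t else 0)"

definition slice_primitive :: "'a list \<Rightarrow> 'a list \<Rightarrow> real" where
  "slice_primitive a = (SOME b. bounded_invariant_primitive G (n - 1 - p) (C (n - 1 - p))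
     (M (n - 1 - Suc p)) (slice a) (reduced_bound n C p * c) b)"

text \<open>The sign makes \<open>total_coboundary correction\<close> equal to \<open>B'\<close> on the slice
  (\<open>total_coboundary_correction_top\<close>), so subtracting it advances the reduction by one stage.\<close>
definition correction :: "'a list \<Rightarrow> 'a list \<Rightarrow> real" where
  "correction a t = (if a \<in> lists L \<and> length a = Suc (Suc p) \<and> t \<in> lists (M (n - 1 - Suc p)) \<and> length t = n - 1 - p
     then (-1) ^ Suc p * slice_primitive a t else 0)"

context
  assumes p_less: "p < n - 1"
begin

lemma M_slice_subset_L: "M (n - 1 - p) \<subseteq> L"
  by (rule M_subset_L) simp

lemma M_correction_subset_slice: "M (n - 1 - Suc p) \<subseteq> M (n - 1 - p)"
  by (rule M_mono) simp

text \<open>The component of \<open>B'\<close> with first tuple of length \<open>p + 2\<close> is a cocycle in the second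
  variable: the total coboundary vanishes, and so does the first coboundary, since the faces of
  the first tuple have length \<open>p + 1\<close> (for \<open>p = 0\<close> use invariance of \<open>B [x] t\<close> in \<open>x\<close>).\<close>
lemma coboundary_slice_eq_0:
  assumes a: "a \<in> lists L" "length a = Suc (Suc p)"
      and t: "t \<in> lists (M (n - 1 - p))" "length t = Suc (Suc (n - 1 - p))"
  shows "coboundary (slice a) t = 0"
proof -
  have tL: "t \<in> lists L" using t M_slice_subset_L by auto
  have "coboundary (slice a) t = coboundary_snd B' a t"
    unfolding coboundary_snd_def using t by (intro coboundary_cong) (simp add: slice_def lists_delete_at)
  moreover have "coboundary_fst B' a t = 0"
  proof (cases p)
    case 0
    then obtain a0 a1 where a01: "a = [a0, a1]" using a by (auto simp: length_Suc_conv)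
    then have "a0 \<in> L" "a1 \<in> L" using a by auto
    then have "[a1] = map ((\<otimes>) (a1 \<otimes> inv a0)) [a0]"
      using L_subgroup by (simp add: subgroup.mem_carrier m_assoc)
    also have "B \<dots> t = B [a0] t"
      using \<open>a0 \<in> L\<close> \<open>a1 \<in> L\<close> L_subgroup tL
      by (intro B_invariant1) (auto simp: subgroup.m_closed subgroup.m_inv_closed)
    finally have "B [a1] t = B [a0] t" .
    then show ?thesis using a01 by (simp add: coboundary_fst_def coboundary_def delete_at_def B'_singleton)
  next
    case (Suc p')
    show ?thesis
      unfolding coboundary_fst_def
      using a t Suc p_less by (intro coboundary_eq_0 B'_reduced) (auto simp: lists_delete_at length_delete_at')
  qed
  moreover have "total_coboundary B' a t = 0"
    using a t tL p_less by (subst total_coboundary_B', intro B_cocycle) auto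
  ultimately show ?thesis by (simp add: total_coboundary_def)
qed

lemma slice_primitive:
  assumes "a \<in> lists L" "length a = Suc (Suc p)"
  shows "bounded_invariant_primitive G (n - 1 - p) (C (n - 1 - p)) (M (n - 1 - Suc p)) (slice a)
    (reduced_bound n C p * c) (slice_primitive a)"
proof -
  define q where "q = n - 1 - p"
  have q: "1 \<le> q" "q \<le> n - 1" "n - 1 - Suc p = q - 1" using p_less by (auto simp: q_def)
  have "0 \<le> reduced_bound n C p * c"
    using reduced_bound_nonneg[of C, OF C_nonneg] c_nonneg by simp
  moreover have "\<forall>xs\<in>lists (M q). length xs = Suc q \<longrightarrow> \<bar>slice a xs\<bar> \<le> reduced_bound n C p * c"
    using assms M_slice_subset_L p_less by (auto simp: slice_def q_def intro!: abs_B'_le)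
  moreover have "\<forall>k\<in>M q. \<forall>xs\<in>lists (M q). length xs = Suc q \<longrightarrow> slice a (map ((\<otimes>) k) xs) = slice a xs"
    using assms M_subgroup[of q] by (auto simp: slice_def lists_map_mult B'_invariant2 q_def)
  moreover have "\<forall>xs\<in>lists (M q). length xs = Suc (Suc q) \<longrightarrow> coboundary (slice a) xs = 0"
    using assms coboundary_slice_eq_0 by (simp add: q_def)
  ultimately have "\<exists>b. bounded_invariant_primitive G q (C q) (M (q - 1)) (slice a) (reduced_bound n C p * c) b"
    using primitives[OF q(1,2)] unfolding uniform_primitives_def by blast
  then show ?thesis
    unfolding slice_primitive_def q(3)[folded q_def] q_def[symmetric] by (rule someI_ex)
qed

lemma abs_correction_le: "\<bar>correction a t\<bar> \<le> C (n - 1 - p) * (reduced_bound n C p * c)"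
  using slice_primitive[of a] C_nonneg[of "n - 1 - p"] reduced_bound_nonneg[of C, OF C_nonneg] c_nonneg
  by (auto simp: correction_def abs_mult bounded_invariant_primitive_def)

lemma correction_eq_0: "length a \<noteq> Suc (Suc p) \<or> length t \<noteq> n - 1 - p \<Longrightarrow> correction a t = 0"
  by (auto simp: correction_def)

lemma correction_invariant1: "x \<in> L \<Longrightarrow> a \<in> lists L \<Longrightarrow> correction (map ((\<otimes>) x) a) t = correction a t"
proof -
  assume "x \<in> L" "a \<in> lists L"
  moreover have "slice (map ((\<otimes>) x) a) t = slice a t" for t
    using calculation M_slice_subset_L by (auto simp: slice_def B'_invariant1 lists_mono_set)
  then have "slice (map ((\<otimes>) x) a) = slice a" ..
  ultimately show ?thesis
    using L_subgroup by (simp add: correction_def slice_primitive_def lists_map_mult)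
qed

lemma correction_invariant2:
  assumes "y \<in> M (n - 1 - Suc p)" "t \<in> lists (M (n - 1 - Suc p))"
  shows "correction a (map ((\<otimes>) y) t) = correction a t"
  using assms slice_primitive[of a] M_subgroup[of "n - 1 - Suc p"]
  by (auto simp: correction_def bounded_invariant_primitive_def lists_map_mult)

lemma total_coboundary_correction_low: "length a \<le> Suc p \<Longrightarrow> total_coboundary correction a t = 0"
  by (rule total_coboundary_eq_0) (auto intro!: correction_eq_0 simp: length_delete_at')

lemma total_coboundary_correction_top:
  assumes a: "a \<in> lists L" "length a = Suc (Suc p)"
      and t: "t \<in> lists (M (n - 1 - Suc p))" "length t = Suc (n - 1 - p)"
  shows "total_coboundary correction a t = B' a t"
proof -
  have "coboundary_fst correction a t = 0"
    unfolding coboundary_fst_def using a by (intro coboundary_eq_0) (simp add: correction_eq_0 length_delete_at')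
  moreover have "coboundary_snd correction a t = (-1) ^ Suc p * coboundary (slice_primitive a) t"
    unfolding coboundary_snd_def
    by (subst coboundary_scale[symmetric], rule coboundary_cong) (use a t in \<open>simp add: correction_def lists_delete_at\<close>)
  moreover have "slice a t = coboundary (slice_primitive a) t"
    using slice_primitive[OF a] t by (simp add: bounded_invariant_primitive_def)
  moreover have "slice a t = B' a t"
    using t M_correction_subset_slice by (auto simp: slice_def)
  ultimately show ?thesis
    using a by (simp add: total_coboundary_def power_mult_distrib[symmetric])
qed

lemma total_coboundary_correction_singleton:
  assumes "a \<in> lists L" "y \<in> M (n - 1 - Suc p)"
  shows "total_coboundary correction a [y] = coboundary (\<lambda>z. correction z [\<one>]) a"
proof -
  have "correction a [] = 0"
    using p_less by (intro correction_eq_0) auto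
  then have "coboundary_snd correction a [y] = 0"
    by (simp add: coboundary_snd_def coboundary_singleton)
  moreover have "correction z [y] = correction z [\<one>]" for z
    using correction_invariant2[of y "[\<one>]" z] assms M_subgroup[of "n - 1 - Suc p"]
    by (simp add: subgroup.mem_carrier subgroup.one_closed)
  ultimately show ?thesis by (simp add: total_coboundary_def coboundary_fst_def)
qed

lemma total_coboundary_correction_invariant1:
  assumes "x \<in> L" "a \<in> lists L"
  shows "total_coboundary correction (map ((\<otimes>) x) a) t = total_coboundary correction a t"
proof -
  have "total_coboundary correction (map ((\<otimes>) x) a) t = total_coboundary (\<lambda>a' t'. correction (map ((\<otimes>) x) a') t') a t"
    using total_coboundary_map[of correction "(\<otimes>) x" a id t] by simp
  also have "\<dots> = total_coboundary correction a t"
    using assms by (intro total_coboundary_cong) (simp_all add: correction_invariant1 lists_delete_at)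
  finally show ?thesis .
qed

lemma total_coboundary_correction_invariant2:
  assumes "y \<in> M (n - 1 - Suc p)" "t \<in> lists (M (n - 1 - Suc p))"
  shows "total_coboundary correction a (map ((\<otimes>) y) t) = total_coboundary correction a t"
proof -
  have "total_coboundary correction a (map ((\<otimes>) y) t) = total_coboundary (\<lambda>a' t'. correction a' (map ((\<otimes>) y) t')) a t"
    using total_coboundary_map[of correction id a "(\<otimes>) y" t] by simp
  also have "\<dots> = total_coboundary correction a t"
    using assms by (intro total_coboundary_cong) (simp_all add: correction_invariant2 lists_delete_at)
  finally show ?thesis .
qed

lemma total_coboundary_correction_cancels:
  assumes "a \<in> lists L" "t \<in> lists (M (n - 1 - Suc p))"
    and "2 \<le> length a" "length a \<le> Suc (Suc p)" "length a + length t = n + 2"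
  shows "B' a t = total_coboundary correction a t"
proof (cases "length a \<le> Suc p")
  case True
  then show ?thesis
    using assms M_correction_subset_slice
    by (auto simp: B'_reduced total_coboundary_correction_low lists_mono_set)
next
  case False
  then show ?thesis
    using assms p_less by (simp add: total_coboundary_correction_top)
qed

lemma abs_corrected_le:
  assumes "a \<in> lists L" "t \<in> lists L" "length a + length t = n + 2"
  shows "\<bar>B' a t - total_coboundary correction a t\<bar> \<le> reduced_bound n C (Suc p) * c"
proof -
  have "\<bar>total_coboundary correction a t\<bar> \<le> real (length a + length t) * (C (n - 1 - p) * (reduced_bound n C p * c))"
    by (intro abs_total_coboundary_le abs_correction_le)
  then have "\<bar>B' a t - total_coboundary correction a t\<bar>
      \<le> reduced_bound n C p * c + real (n + 2) * (C (n - 1 - p) * (reduced_bound n C p * c))"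
    using abs_B'_le[OF assms] abs_triangle_ineq4[of "B' a t"] assms(3) by simp
  then show ?thesis
    by (simp add: algebra_simps)
qed

lemma reduced_bicochain_Suc:
  "reduced_bicochain G n M L C B c (Suc p) (\<lambda>a t. B' a t - total_coboundary correction a t)"
proof unfold_locales
  fix a t
  show "B' [] t - total_coboundary correction [] t = 0"
    by (simp add: B'_Nil1 total_coboundary_correction_low)
  have "total_coboundary correction a [] = 0"
    using p_less by (intro total_coboundary_eq_0) (auto intro!: correction_eq_0)
  then show "B' a [] - total_coboundary correction a [] = 0"
    by (simp add: B'_Nil2)
  show "total_coboundary (\<lambda>a t. B' a t - total_coboundary correction a t) a t = total_coboundary B a t"
    by (simp add: total_coboundary_diff total_coboundary_twice total_coboundary_B')
next
  fix x a t
  assume "x \<in> L" "a \<in> lists L" "t \<in> lists L"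
  then show "B' (map ((\<otimes>) x) a) t - total_coboundary correction (map ((\<otimes>) x) a) t
      = B' a t - total_coboundary correction a t"
    by (simp add: B'_invariant1 total_coboundary_correction_invariant1)
next
  fix y a t
  assume "y \<in> M (n - 1 - Suc p)" "a \<in> lists L" "t \<in> lists (M (n - 1 - Suc p))"
  moreover from this have "B' a (map ((\<otimes>) y) t) = B' a t"
    using M_correction_subset_slice by (intro B'_invariant2) auto
  ultimately show "B' a (map ((\<otimes>) y) t) - total_coboundary correction a (map ((\<otimes>) y) t)
      = B' a t - total_coboundary correction a t"
    by (simp add: total_coboundary_correction_invariant2)
next
  fix a t
  assume "a \<in> lists L" "t \<in> lists (M (n - 1 - Suc p))"
    "2 \<le> length a" "length a \<le> Suc (Suc p)" "length a + length t = n + 2"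
  then show "B' a t - total_coboundary correction a t = 0"
    by (simp add: total_coboundary_correction_cancels)
next
  fix x t
  show "B' [x] t - total_coboundary correction [x] t = B [x] t"
    by (simp add: B'_singleton total_coboundary_correction_low)
next
  fix a t
  assume "a \<in> lists L" "t \<in> lists L" "length a + length t = n + 2"
  then show "\<bar>B' a t - total_coboundary correction a t\<bar> \<le> reduced_bound n C (Suc p) * c"
    by (rule abs_corrected_le)
qed

lemma edge_correction_Suc:
  assumes "edge_correction p B' w"
  shows "edge_correction (Suc p) (\<lambda>a t. B' a t - total_coboundary correction a t) (\<lambda>a. w a + correction a [\<one>])"
  unfolding edge_correction_def
proof (intro conjI ballI impI)
  fix a y
  assume "a \<in> lists L" "y \<in> M (n - 1 - Suc p)" "length a = Suc n"
  then show "B' a [y] - total_coboundary correction a [y] = B a [y] - coboundary (\<lambda>a. w a + correction a [\<one>]) a"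
    using assms M_correction_subset_slice
    by (auto simp: edge_correction_def total_coboundary_correction_singleton coboundary_add)
next
  fix h a
  assume "h \<in> L" "a \<in> lists L" "length a = n"
  then show "w (map ((\<otimes>) h) a) + correction (map ((\<otimes>) h) a) [\<one>] = w a + correction a [\<one>]"
    using assms by (simp add: edge_correction_def correction_invariant1)
next
  fix a
  assume "a \<in> lists L" "length a = n"
  then have "\<bar>w a + correction a [\<one>]\<bar> \<le> edge_bound n C p * c + C (n - 1 - p) * (reduced_bound n C p * c)"
    using assms abs_correction_le by (intro abs_triangle_ineq[THEN order_trans] add_mono) (auto simp: edge_correction_def)
  then show "\<bar>w a + correction a [\<one>]\<bar> \<le> edge_bound n C (Suc p) * c"
    by (simp add: algebra_simps)
qed

lemma diagonal_correction_Suc: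
  assumes "diagonal_correction p B' E"
  shows "diagonal_correction (Suc p) (\<lambda>a t. B' a t - total_coboundary correction a t)
    (\<lambda>\<tau>. E \<tau> + alexander_whitney correction \<tau>)"
  unfolding diagonal_correction_def
proof (intro conjI ballI impI)
  fix \<sigma>
  assume "\<sigma> \<in> lists (M 0)" "length \<sigma> = Suc n"
  moreover have "alexander_whitney (total_coboundary correction) \<sigma> = coboundary (alexander_whitney correction) \<sigma>"
    using p_less by (intro alexander_whitney_total_coboundary correction_eq_0) auto
  ultimately show "alexander_whitney B \<sigma> = alexander_whitney (\<lambda>a t. B' a t - total_coboundary correction a t) \<sigma>
      + coboundary (\<lambda>\<tau>. E \<tau> + alexander_whitney correction \<tau>) \<sigma>"
    using assms by (simp add: diagonal_correction_def alexander_whitney_diff coboundary_add)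
next
  fix h \<tau>
  assume h: "h \<in> M 0" and \<tau>: "\<tau> \<in> lists (M 0)" "length \<tau> = n"
  have M0: "M 0 \<subseteq> L" "M 0 \<subseteq> M (n - 1 - Suc p)"
    using M_subset_L M_mono by auto
  have "alexander_whitney correction (map ((\<otimes>) h) \<tau>) = alexander_whitney correction \<tau>"
    unfolding alexander_whitney_map
  proof (rule alexander_whitney_cong)
    fix k
    have "take (Suc k) \<tau> \<in> lists L" "drop k \<tau> \<in> lists (M (n - 1 - Suc p))"
      using \<tau> M0 by (auto dest: in_set_takeD in_set_dropD)
    then show "correction (map ((\<otimes>) h) (take (Suc k) \<tau>)) (map ((\<otimes>) h) (drop k \<tau>))
        = correction (take (Suc k) \<tau>) (drop k \<tau>)"
      using h M0 by (simp add: correction_invariant1 correction_invariant2 subsetD)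
  qed
  then show "E (map ((\<otimes>) h) \<tau>) + alexander_whitney correction (map ((\<otimes>) h) \<tau>) = E \<tau> + alexander_whitney correction \<tau>"
    using assms h \<tau> by (simp add: diagonal_correction_def)
next
  fix \<tau>
  assume "\<tau> \<in> lists (M 0)" "length \<tau> = n"
  moreover have "\<bar>alexander_whitney correction \<tau>\<bar> \<le> real (length \<tau>) * (C (n - 1 - p) * (reduced_bound n C p * c))"
    by (intro abs_alexander_whitney_le abs_correction_le)
  ultimately have "\<bar>E \<tau> + alexander_whitney correction \<tau>\<bar> \<le> diagonal_bound n C p * c + real n * (C (n - 1 - p) * (reduced_bound n C p * c))"
    using assms by (intro abs_triangle_ineq[THEN order_trans] add_mono) (auto simp: diagonal_correction_def)
  then show "\<bar>E \<tau> + alexander_whitney correction \<tau>\<bar> \<le> diagonal_bound n C (Suc p) * c"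
    by (simp add: algebra_simps)
qed

end

end

lemma (in bicocycle_reduction) reduction_stage_exists:
  "p \<le> n - 1 \<Longrightarrow> \<exists>B' w E. reduced_bicochain G n M L C B c p B' \<and> edge_correction p B' w \<and> diagonal_correction p B' E"
proof (induction p)
  case 0
  then show ?case using reduction_stage_0 by blast
next
  case (Suc p)
  then obtain B' w E where "reduced_bicochain G n M L C B c p B'" "edge_correction p B' w" "diagonal_correction p B' E"
    by auto
  then interpret reduced_bicochain G n M L C B c p B'
    by simp
  show ?case
    using Suc.prems reduced_bicochain_Suc edge_correction_Suc diagonal_correction_Suc
      \<open>edge_correction p B' w\<close> \<open>diagonal_correction p B' E\<close> by fastforce
qed

lemma (in reduced_bicochain) alexander_whitney_last_stage:
  assumes "p = n - 1" "\<sigma> \<in> lists (M 0)" "length \<sigma> = Suc n"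
  shows "alexander_whitney B' \<sigma> = B [hd \<sigma>] \<sigma> + B' \<sigma> [last \<sigma>]"
proof -
  obtain n' where n': "n = Suc n'" using n_ge_1 by (cases n) auto
  have "last \<sigma> = \<sigma> ! n"
    using assms by (cases \<sigma> rule: rev_cases) auto
  then have "drop n \<sigma> = [last \<sigma>]"
    using assms by (simp add: Cons_nth_drop_Suc[symmetric])
  then have "alexander_whitney B' \<sigma> = (\<Sum>k<n. B' (take (Suc k) \<sigma>) (drop k \<sigma>)) + B' \<sigma> [last \<sigma>]"
    using assms by (simp add: alexander_whitney_def)
  also have "(\<Sum>k<n. B' (take (Suc k) \<sigma>) (drop k \<sigma>))
      = B' [hd \<sigma>] \<sigma> + (\<Sum>k<n'. B' (take (Suc (Suc k)) \<sigma>) (drop (Suc k) \<sigma>))"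
    using assms unfolding n' by (subst sum.lessThan_Suc_shift) (cases \<sigma>, simp_all)
  also have "(\<Sum>k<n'. B' (take (Suc (Suc k)) \<sigma>) (drop (Suc k) \<sigma>)) = 0"
    using assms n' M_subset_L[of 0]
    by (intro sum.neutral ballI B'_reduced) (auto simp: lists_take lists_drop lists_mono_set)
  finally show ?thesis
    by (simp add: B'_singleton)
qed

lemma (in bicocycle_reduction) alexander_whitney_reduced:
  obtains e where "\<And>\<tau>. \<tau> \<in> lists (M 0) \<Longrightarrow> length \<tau> = n \<Longrightarrow> \<bar>e \<tau>\<bar> \<le> (diagonal_bound n C (n - 1) + edge_bound n C (n - 1)) * c"
    and "\<And>h \<tau>. h \<in> M 0 \<Longrightarrow> \<tau> \<in> lists (M 0) \<Longrightarrow> length \<tau> = n \<Longrightarrow> e (map ((\<otimes>) h) \<tau>) = e \<tau>"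
    and "\<And>\<sigma>. \<sigma> \<in> lists (M 0) \<Longrightarrow> length \<sigma> = Suc n \<Longrightarrow>
      alexander_whitney B \<sigma> = B [hd \<sigma>] \<sigma> + B \<sigma> [last \<sigma>] + coboundary e \<sigma>"
proof -
  obtain B' w E where B': "reduced_bicochain G n M L C B c (n - 1) B'"
    and w: "edge_correction (n - 1) B' w" and E: "diagonal_correction (n - 1) B' E"
    using reduction_stage_exists by blast
  interpret reduced_bicochain G n M L C B c "n - 1" B'
    by (fact B')
  have M0L: "M 0 \<subseteq> L" using M_subset_L by simp
  show ?thesis
  proof
    fix \<tau> assume \<tau>: "\<tau> \<in> lists (M 0)" "length \<tau> = n"
    moreover have "\<tau> \<in> lists L" using \<tau> M0L by auto
    ultimately have "\<bar>E \<tau>\<bar> \<le> diagonal_bound n C (n - 1) * c" "\<bar>w \<tau>\<bar> \<le> edge_bound n C (n - 1) * c"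
      using w E unfolding edge_correction_def diagonal_correction_def by blast+
    then show "\<bar>E \<tau> - w \<tau>\<bar> \<le> (diagonal_bound n C (n - 1) + edge_bound n C (n - 1)) * c"
      by (simp add: algebra_simps abs_diff_le_iff abs_le_iff)
  next
    fix h \<tau> assume "h \<in> M 0" "\<tau> \<in> lists (M 0)" "length \<tau> = n"
    moreover from this have "h \<in> L" "\<tau> \<in> lists L" using M0L by auto
    ultimately show "E (map ((\<otimes>) h) \<tau>) - w (map ((\<otimes>) h) \<tau>) = E \<tau> - w \<tau>"
      using w E unfolding edge_correction_def diagonal_correction_def by simp
  next
    fix \<sigma> assume \<sigma>: "\<sigma> \<in> lists (M 0)" "length \<sigma> = Suc n"
    then have "\<sigma> \<in> lists L" "last \<sigma> \<in> M 0"
      using M0L by (auto intro!: last_in_set simp flip: length_greater_0_conv)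
    then have "B' \<sigma> [last \<sigma>] = B \<sigma> [last \<sigma>] - coboundary w \<sigma>"
      using w \<sigma> unfolding edge_correction_def by auto
    then have "alexander_whitney B' \<sigma> = B [hd \<sigma>] \<sigma> + (B \<sigma> [last \<sigma>] - coboundary w \<sigma>)"
      using alexander_whitney_last_stage[OF refl \<sigma>] by simp
    then show "alexander_whitney B \<sigma> = B [hd \<sigma>] \<sigma> + B \<sigma> [last \<sigma>] + coboundary (\<lambda>\<tau>. E \<tau> - w \<tau>) \<sigma>"
      using E \<sigma> by (simp add: diagonal_correction_def coboundary_diff)
  qed
qed

section \<open>Primitives on a subgroup with a pseudo-mitosis\<close>

definition primitive_bound :: "nat \<Rightarrow> (nat \<Rightarrow> real) \<Rightarrow> real" where
  "primitive_bound n C = cone_homotopy_bound (\<lambda>_. 1) n + cone_homotopy_bound (\<lambda>k. real k * fact (Suc k)) n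
     + (diagonal_bound n C (n - 1) + edge_bound n C (n - 1)) * fact (n + 2)"

lemma primitive_bound_nonneg: "(\<And>q. 0 \<le> C q) \<Longrightarrow> 0 \<le> primitive_bound n C"
  unfolding primitive_bound_def
  by (intro add_nonneg_nonneg mult_nonneg_nonneg cone_homotopy_bound_nonneg diagonal_bound_nonneg
      edge_bound_nonneg) simp_all

locale mitotic_chain = mitosis_data G \<psi>1 L K \<psi>0 g for G :: "('a, 'c) monoid_scheme" (structure) and \<psi>1 L K \<psi>0 g +
  fixes n :: nat and M :: "nat \<Rightarrow> 'a set" and C :: "nat \<Rightarrow> real"
  assumes n_ge_1: "1 \<le> n"
    and M_subgroup: "\<And>q. subgroup (M q) G" and M_Suc: "\<And>q. M q \<subseteq> M (Suc q)" and M_L: "M (n - 1) \<subseteq> L"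
    and primitives: "\<And>q. 1 \<le> q \<Longrightarrow> q \<le> n - 1 \<Longrightarrow> uniform_primitives G q (C q) (M (q - 1)) (M q)"
    and C_nonneg: "\<And>q. 0 \<le> C q"
begin

lemma lists_L_subset_K: "xs \<in> lists L \<Longrightarrow> xs \<in> lists K"
  using L_subset_K by auto

context
  fixes f :: "'a list \<Rightarrow> real" and c :: real
  assumes c_nonneg: "0 \<le> c"
    and abs_f_le: "\<And>xs. xs \<in> lists K \<Longrightarrow> length xs = Suc n \<Longrightarrow> \<bar>f xs\<bar> \<le> c"
    and f_invariant: "\<And>k xs. k \<in> K \<Longrightarrow> xs \<in> lists K \<Longrightarrow> f (map ((\<otimes>) k) xs) = f xs"
    and f_cocycle: "\<And>xs. xs \<in> lists K \<Longrightarrow> length xs = Suc (Suc n) \<Longrightarrow> coboundary f xs = 0"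
begin

lemma bicocycle_reduction_cross:
  "bicocycle_reduction G n M L C (cross_bicochain (\<otimes>) \<psi>1 f) (fact (n + 2) * c)"
proof (intro bicocycle_reduction.intro bicocycle_reduction_axioms.intro)
  fix a t
  assume "a \<in> lists L" "t \<in> lists L" "a \<noteq> []" "t \<noteq> []" "length a + length t = n + 3"
  then show "total_coboundary (cross_bicochain (\<otimes>) \<psi>1 f) a t = 0"
    by (simp add: cross_bicochain_coboundary[symmetric] cross_bicochain_eq_0 f_cocycle)
next
  fix x a t
  assume x: "x \<in> L" and a: "a \<in> lists L" and t: "t \<in> lists L"
  have "map ((\<otimes>) \<one>) t = t"
    using t L_subset by (intro map_idI l_one) auto
  then have "cross_bicochain (\<otimes>) \<psi>1 f (map ((\<otimes>) x) a) t
      = cross_bicochain (\<otimes>) \<psi>1 f (map ((\<otimes>) x) a) (map ((\<otimes>) \<one>) t)"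
    by simp
  also have "\<dots> = cross_bicochain (\<otimes>) \<psi>1 (\<lambda>xs. f (map ((\<otimes>) x) xs)) a t"
    using x a t L_subgroup L_subset by (simp add: cross_bicochain_translate subgroup.one_closed \<psi>1_one subsetD)
  also have "\<dots> = cross_bicochain (\<otimes>) \<psi>1 f a t"
    using x a t by (intro cross_bicochain_local f_invariant L_subset_K)
  finally show "cross_bicochain (\<otimes>) \<psi>1 f (map ((\<otimes>) x) a) t = cross_bicochain (\<otimes>) \<psi>1 f a t" .
next
  fix y a t
  assume y: "y \<in> L" and a: "a \<in> lists L" and t: "t \<in> lists L"
  have "map ((\<otimes>) \<one>) a = a"
    using a L_subset by (intro map_idI l_one) auto
  then have "cross_bicochain (\<otimes>) \<psi>1 f a (map ((\<otimes>) y) t)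
      = cross_bicochain (\<otimes>) \<psi>1 f (map ((\<otimes>) \<one>) a) (map ((\<otimes>) y) t)"
    by simp
  also have "\<dots> = cross_bicochain (\<otimes>) \<psi>1 (\<lambda>xs. f (map ((\<otimes>) (\<psi>1 y)) xs)) a t"
    using y a t L_subgroup \<psi>_closed by (simp add: cross_bicochain_translate subgroup.one_closed)
  also have "\<dots> = cross_bicochain (\<otimes>) \<psi>1 f a t"
    using y a t by (intro cross_bicochain_local f_invariant \<psi>1_in_K)
  finally show "cross_bicochain (\<otimes>) \<psi>1 f a (map ((\<otimes>) y) t) = cross_bicochain (\<otimes>) \<psi>1 f a t" .
next
  fix a t
  assume "a \<in> lists L" "t \<in> lists L" "length a + length t = n + 2"
  then show "\<bar>cross_bicochain (\<otimes>) \<psi>1 f a t\<bar> \<le> fact (n + 2) * c"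
    using abs_cross_bicochain_le[of a t f c] c_nonneg by (simp add: abs_f_le)
qed (use is_group n_ge_1 M_subgroup M_Suc L_subgroup M_L primitives C_nonneg c_nonneg in auto)

lemma coboundary_cone_homotopy_cross:
  assumes "\<sigma> \<in> lists L" "length \<sigma> = Suc n"
  shows "coboundary (cone_homotopy \<psi>0 (\<lambda>F s. alexander_whitney (cross_bicochain (\<otimes>) \<psi>1 F) s) f) \<sigma>
    = f (map \<psi>0 \<sigma>) - alexander_whitney (cross_bicochain (\<otimes>) \<psi>1 f) \<sigma>"
proof -
  have "cone_homotopy \<psi>0 (\<lambda>F s. alexander_whitney (cross_bicochain (\<otimes>) \<psi>1 F) s) (coboundary f) \<sigma> = 0"
    using assms by (intro cross.cone_homotopy_eq_0 f_cocycle) auto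
  moreover have "\<sigma> \<noteq> []"
    using assms by auto
  ultimately show ?thesis
    using cone_homotopy_cross_eq[of \<sigma> \<psi>0 "(\<otimes>)" \<psi>1 f] by simp
qed

lemma coboundary_cone_homotopy_conj:
  assumes "\<sigma> \<in> lists L" "length \<sigma> = Suc n"
  shows "coboundary (cone_homotopy \<psi>0 (\<lambda>F s. F (map (\<lambda>x. \<psi>0 x \<otimes> g) s)) f) \<sigma>
    = f (map \<psi>0 \<sigma>) - f (map \<psi>1 \<sigma>)"
proof -
  have "cone_homotopy \<psi>0 (\<lambda>F s. F (map (\<lambda>x. \<psi>0 x \<otimes> g) s)) (coboundary f) \<sigma> = 0"
    using assms by (intro conj.cone_homotopy_eq_0 f_cocycle) auto
  moreover have "f (map (\<lambda>x. \<psi>0 x \<otimes> g) \<sigma>) = f (map ((\<otimes>) g) (map \<psi>1 \<sigma>))"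
    using assms by (auto simp: g_conj intro!: arg_cong[where f = f])
  moreover have "f (map ((\<otimes>) g) (map \<psi>1 \<sigma>)) = f (map \<psi>1 \<sigma>)"
    using assms by (intro f_invariant g_in_K) (auto intro!: \<psi>1_in_K)
  moreover have "\<sigma> \<noteq> []"
    using assms by auto
  ultimately show ?thesis
    using cone_homotopy_map_eq[of \<sigma> \<psi>0 "\<lambda>x. \<psi>0 x \<otimes> g" f] by simp
qed

lemma cross_bicochain_ends:
  assumes "\<sigma> \<in> lists L" "\<sigma> \<noteq> []"
  shows "cross_bicochain (\<otimes>) \<psi>1 f [hd \<sigma>] \<sigma> = f (map \<psi>1 \<sigma>)"
    and "cross_bicochain (\<otimes>) \<psi>1 f \<sigma> [last \<sigma>] = f \<sigma>"
proof -
  have "cross_bicochain (\<otimes>) \<psi>1 f [hd \<sigma>] \<sigma> = f (map ((\<otimes>) (hd \<sigma>)) (map \<psi>1 \<sigma>))"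
    using assms by (simp add: cross_bicochain_singleton1 comp_def)
  also have "\<dots> = f (map \<psi>1 \<sigma>)"
    using assms by (intro f_invariant L_subset_K hd_in_lists) (auto intro!: \<psi>1_in_K)
  finally show "cross_bicochain (\<otimes>) \<psi>1 f [hd \<sigma>] \<sigma> = f (map \<psi>1 \<sigma>)" .
  have "last \<sigma> \<in> L"
    using assms by auto
  then have "cross_bicochain (\<otimes>) \<psi>1 f \<sigma> [last \<sigma>] = f (map ((\<otimes>) (\<psi>1 (last \<sigma>))) \<sigma>)"
    using assms by (auto simp: cross_bicochain_singleton2 \<psi>_commute intro!: arg_cong[where f = f])
  also have "\<dots> = f \<sigma>"
    using assms \<open>last \<sigma> \<in> L\<close> by (intro f_invariant \<psi>1_in_K lists_L_subset_K)
  finally show "cross_bicochain (\<otimes>) \<psi>1 f \<sigma> [last \<sigma>] = f \<sigma>" .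
qed

text \<open>The primitive \<open>T\<^sub>2 - T\<^sub>1 - e\<close>: the cone homotopies \<open>T\<^sub>1\<close> and \<open>T\<^sub>2\<close> connect \<open>\<psi>\<^sub>0\<^sup>* f\<close> with the
  diagonal of the cross product and with \<open>\<psi>\<^sub>1\<^sup>* f\<close>, and \<open>e\<close> removes the mixed components of the
  cross product, whose ends are \<open>\<psi>\<^sub>1\<^sup>* f\<close> and \<open>f\<close>.\<close>
lemma bounded_invariant_primitive_exists:
  "\<exists>b. bounded_invariant_primitive G n (primitive_bound n C) (M 0) f c b"
proof -
  interpret R: bicocycle_reduction G n M L C "cross_bicochain (\<otimes>) \<psi>1 f" "fact (n + 2) * c"
    by (rule bicocycle_reduction_cross)
  obtain e where abs_e_le: "\<And>\<tau>. \<tau> \<in> lists (M 0) \<Longrightarrow> length \<tau> = n \<Longrightarrow>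
      \<bar>e \<tau>\<bar> \<le> (diagonal_bound n C (n - 1) + edge_bound n C (n - 1)) * (fact (n + 2) * c)"
    and e_invariant: "\<And>h \<tau>. h \<in> M 0 \<Longrightarrow> \<tau> \<in> lists (M 0) \<Longrightarrow> length \<tau> = n \<Longrightarrow> e (map ((\<otimes>) h) \<tau>) = e \<tau>"
    and alexander_whitney_eq: "\<And>\<sigma>. \<sigma> \<in> lists (M 0) \<Longrightarrow> length \<sigma> = Suc n \<Longrightarrow>
      alexander_whitney (cross_bicochain (\<otimes>) \<psi>1 f) \<sigma>
        = cross_bicochain (\<otimes>) \<psi>1 f [hd \<sigma>] \<sigma> + cross_bicochain (\<otimes>) \<psi>1 f \<sigma> [last \<sigma>] + coboundary e \<sigma>"
    using R.alexander_whitney_reduced by blast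
  define T1 where "T1 = cone_homotopy \<psi>0 (\<lambda>F s. alexander_whitney (cross_bicochain (\<otimes>) \<psi>1 F) s) f"
  define T2 where "T2 = cone_homotopy \<psi>0 (\<lambda>F s. F (map (\<lambda>x. \<psi>0 x \<otimes> g) s)) f"
  have M0: "xs \<in> lists (M 0) \<Longrightarrow> xs \<in> lists L" for xs
    using R.M_subset_L[of 0] by auto
  show ?thesis
    unfolding bounded_invariant_primitive_def
  proof (intro exI[of _ "\<lambda>\<tau>. T2 \<tau> - T1 \<tau> - e \<tau>"] conjI ballI impI)
    fix \<tau> assume \<tau>: "\<tau> \<in> lists (M 0)" "length \<tau> = n"
    have "\<bar>T2 \<tau>\<bar> \<le> cone_homotopy_bound (\<lambda>_. 1) (length \<tau>) * c"
      unfolding T2_def by (rule conj.abs_cone_homotopy_le) (use \<tau> M0 c_nonneg in \<open>auto intro!: abs_f_le\<close>)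
    moreover have "\<bar>T1 \<tau>\<bar> \<le> cone_homotopy_bound (\<lambda>k. real k * fact (Suc k)) (length \<tau>) * c"
      unfolding T1_def by (rule cross.abs_cone_homotopy_le) (use \<tau> M0 c_nonneg in \<open>auto intro!: abs_f_le\<close>)
    moreover note abs_e_le[OF \<tau>]
    ultimately have "\<bar>T2 \<tau> - T1 \<tau> - e \<tau>\<bar> \<le> cone_homotopy_bound (\<lambda>_. 1) n * c
        + cone_homotopy_bound (\<lambda>k. real k * fact (Suc k)) n * c
        + (diagonal_bound n C (n - 1) + edge_bound n C (n - 1)) * (fact (n + 2) * c)"
      unfolding \<tau>(2) by (simp only: abs_le_iff) linarith
    then show "\<bar>T2 \<tau> - T1 \<tau> - e \<tau>\<bar> \<le> primitive_bound n C * c"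
      by (simp add: primitive_bound_def algebra_simps)
  next
    fix h \<tau> assume h: "h \<in> M 0" and \<tau>: "\<tau> \<in> lists (M 0)" "length \<tau> = n"
    then have "h \<in> L" "\<tau> \<in> lists L"
      using R.M_subset_L[of 0] M0 by auto
    then show "T2 (map ((\<otimes>) h) \<tau>) - T1 (map ((\<otimes>) h) \<tau>) - e (map ((\<otimes>) h) \<tau>) = T2 \<tau> - T1 \<tau> - e \<tau>"
      unfolding T1_def T2_def using h \<tau>
      by (simp add: conj.cone_homotopy_invariant cross.cone_homotopy_invariant f_invariant e_invariant)
  next
    fix \<sigma> assume \<sigma>: "\<sigma> \<in> lists (M 0)" "length \<sigma> = Suc n"
    then have "\<sigma> \<in> lists L" "\<sigma> \<noteq> []"
      using M0 by auto
    then show "f \<sigma> = coboundary (\<lambda>\<tau>. T2 \<tau> - T1 \<tau> - e \<tau>) \<sigma>"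
      using \<sigma> alexander_whitney_eq[OF \<sigma>] unfolding T1_def T2_def
      by (simp add: coboundary_diff coboundary_cone_homotopy_cross coboundary_cone_homotopy_conj cross_bicochain_ends)
  qed
qed

end

lemma uniform_primitives_bottom: "uniform_primitives G n (primitive_bound n C) (M 0) K"
  unfolding uniform_primitives_def
proof (intro allI impI)
  fix \<phi> :: "'a list \<Rightarrow> real" and c :: real
  assume "0 \<le> c" and \<phi>: "\<forall>xs\<in>lists K. length xs = Suc n \<longrightarrow> \<bar>\<phi> xs\<bar> \<le> c"
    "\<forall>k\<in>K. \<forall>xs\<in>lists K. length xs = Suc n \<longrightarrow> \<phi> (map ((\<otimes>) k) xs) = \<phi> xs"
    "\<forall>xs\<in>lists K. length xs = Suc (Suc n) \<longrightarrow> coboundary \<phi> xs = 0"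
  text \<open>Only the values of \<open>\<phi>\<close> in degree \<open>n\<close> are constrained; extending them by \<open>0\<close> gives a
    cochain that is invariant in every degree.\<close>
  define f where "f xs = (if length xs = Suc n then \<phi> xs else 0)" for xs
  have "coboundary f xs = coboundary \<phi> xs" if "length xs = Suc (Suc n)" for xs
    using that by (intro coboundary_cong) (simp add: f_def length_delete_at')
  then have "\<exists>b. bounded_invariant_primitive G n (primitive_bound n C) (M 0) f c b"
    using \<open>0 \<le> c\<close> \<phi> by (intro bounded_invariant_primitive_exists) (auto simp: f_def)
  then show "\<exists>b. bounded_invariant_primitive G n (primitive_bound n C) (M 0) \<phi> c b"
    by (simp add: bounded_invariant_primitive_def f_def)
qed

end

section \<open>Uniformly bounded primitives on finitely generated subgroups\<close>

definition uniformly_acyclic_fg :: "('a, 'c) monoid_scheme \<Rightarrow> nat \<Rightarrow> bool" where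
  "uniformly_acyclic_fg G q \<longleftrightarrow> (\<exists>C. 0 \<le> C \<and> (\<forall>S. finite S \<and> S \<subseteq> carrier G \<longrightarrow>
     (\<exists>S'. finite S' \<and> S \<subseteq> S' \<and> S' \<subseteq> carrier G \<and> uniform_primitives G q C (generate G S) (generate G S'))))"

lemma (in group) commutator_eq_one_imp_commute:
  assumes "a \<in> carrier G" "b \<in> carrier G" "commutator G a b = \<one>"
  shows "a \<otimes> b = b \<otimes> a"
proof -
  have "(inv a \<otimes> inv b) \<otimes> (a \<otimes> b) = \<one>"
    using assms by (simp add: commutator_def m_assoc)
  then have "inv (a \<otimes> b) = inv a \<otimes> inv b"
    using assms by (intro inv_equality) auto
  then have "a \<otimes> b = inv (inv a \<otimes> inv b)"
    using assms by (metis inv_inv m_closed)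
  also have "\<dots> = b \<otimes> a"
    using assms by (simp add: inv_mult_group)
  finally show ?thesis .
qed

lemma (in group) hom_generate_subset:
  assumes "\<psi> \<in> hom (G\<lparr>carrier := generate G S\<rparr>) G" "S \<subseteq> carrier G"
  shows "\<psi> ` generate G S \<subseteq> generate G (\<psi> ` S)"
proof -
  have L: "subgroup (generate G S) G"
    using assms(2) by (rule generate_is_subgroup)
  interpret h: group_hom "G\<lparr>carrier := generate G S\<rparr>" G \<psi>
    using assms(1) subgroup_imp_group[OF L] is_group by (simp add: group_hom_def group_hom_axioms_def)
  have S: "S \<subseteq> generate G S"
    by (auto intro: generate.incl)
  have "generate G (\<psi> ` S) = \<psi> ` generate (G\<lparr>carrier := generate G S\<rparr>) S"
    using S by (intro h.generate_img) simp
  also have "generate (G\<lparr>carrier := generate G S\<rparr>) S = generate G S"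
    using S L by (rule generate_consistent)
  finally show ?thesis by simp
qed

lemma (in group) pseudo_mitosis_data:
  assumes "pseudo_mitotic G" "finite S" "S \<subseteq> carrier G"
  obtains \<psi>0 \<psi>1 g S' where "finite S'" "S \<subseteq> S'" "S' \<subseteq> carrier G"
    and "mitosis_data G \<psi>1 (generate G S) (generate G S') \<psi>0 g"
proof -
  define L where "L = generate G S"
  have L: "subgroup L G"
    unfolding L_def using assms(3) by (rule generate_is_subgroup)
  then have L_carrier: "x \<in> L \<Longrightarrow> x \<in> carrier G" for x
    by (rule subgroup.mem_carrier)
  have "has_pseudo_mitosis G L"
    using assms unfolding pseudo_mitotic_def L_def by blast
  then obtain \<psi>0 \<psi>1 g where \<psi>0: "\<psi>0 \<in> hom (G\<lparr>carrier := L\<rparr>) G" and \<psi>1: "\<psi>1 \<in> hom (G\<lparr>carrier := L\<rparr>) G"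
    and g: "g \<in> carrier G" and \<psi>0_eq: "\<And>h. h \<in> L \<Longrightarrow> h \<otimes> \<psi>1 h = \<psi>0 h"
    and commute: "\<And>h h'. h \<in> L \<Longrightarrow> h' \<in> L \<Longrightarrow> commutator G h (\<psi>1 h') = \<one>"
    and conj: "\<And>h. h \<in> L \<Longrightarrow> \<psi>1 h = inv g \<otimes> \<psi>0 h \<otimes> g"
    unfolding has_pseudo_mitosis_def by blast
  have \<psi>0_closed: "x \<in> L \<Longrightarrow> \<psi>0 x \<in> carrier G" and \<psi>1_closed: "x \<in> L \<Longrightarrow> \<psi>1 x \<in> carrier G" for x
    using \<psi>0 \<psi>1 by (auto simp: hom_def)
  define S' where "S' = S \<union> \<psi>0 ` S \<union> \<psi>1 ` S \<union> {g}"
  define K where "K = generate G S'"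
  have S': "finite S'" "S \<subseteq> S'" "S' \<subseteq> carrier G"
    using assms(2,3) g \<psi>0_closed \<psi>1_closed generate.incl[of _ S G] by (auto simp: S'_def L_def)
  have K: "subgroup K G"
    unfolding K_def using S'(3) by (rule generate_is_subgroup)
  have L_K: "L \<subseteq> K"
    unfolding L_def K_def by (rule mono_generate) (auto simp: S'_def)
  have \<psi>1_K: "\<psi>1 x \<in> K" if "x \<in> L" for x
  proof -
    have "\<psi>1 x \<in> generate G (\<psi>1 ` S)"
      using hom_generate_subset[of \<psi>1 S] \<psi>1 assms(3) that by (auto simp: L_def)
    also have "\<dots> \<subseteq> K"
      unfolding K_def by (rule mono_generate) (auto simp: S'_def)
    finally show ?thesis .
  qed
  have "mitosis_data G \<psi>1 L K \<psi>0 g"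
  proof (intro mitosis_data.intro commuting_twist.intro commuting_twist_axioms.intro mitosis_data_axioms.intro)
    fix x y assume "x \<in> L" "y \<in> L"
    then show "x \<otimes> \<psi>1 y = \<psi>1 y \<otimes> x"
      using commute L_carrier \<psi>1_closed by (intro commutator_eq_one_imp_commute) auto
    show "x \<otimes> \<psi>1 y \<in> K"
      using \<open>x \<in> L\<close> \<open>y \<in> L\<close> L_K \<psi>1_K K by (auto intro: subgroup.m_closed)
    show "\<psi>1 (x \<otimes> y) = \<psi>1 x \<otimes> \<psi>1 y"
      using hom_mult[OF \<psi>1, of x y] \<open>x \<in> L\<close> \<open>y \<in> L\<close> by simp
  next
    fix x assume "x \<in> L"
    then show "\<psi>0 x \<otimes> g = g \<otimes> \<psi>1 x"
      using conj[of x] g \<psi>0_closed by (simp add: m_assoc[symmetric])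
  next
    show "g \<in> K"
      unfolding K_def by (rule generate.incl) (simp add: S'_def)
  qed (use is_group L K L_carrier \<psi>1_closed \<psi>0_eq in auto)
  with S' show ?thesis
    unfolding L_def K_def by (rule that)
qed

lemma (in group) subgroup_chain:
  assumes "\<And>q. 1 \<le> q \<Longrightarrow> q < n \<Longrightarrow> \<forall>S. finite S \<and> S \<subseteq> carrier G \<longrightarrow>
      (\<exists>S'. finite S' \<and> S \<subseteq> S' \<and> S' \<subseteq> carrier G \<and> uniform_primitives G q (C q) (generate G S) (generate G S'))"
    and "finite S" "S \<subseteq> carrier G"
  obtains Sq where "Sq 0 = S" "\<And>q. finite (Sq q)" "\<And>q. Sq q \<subseteq> carrier G" "\<And>q. Sq q \<subseteq> Sq (Suc q)"
    and "\<And>q. Suc q < n \<Longrightarrow> uniform_primitives G (Suc q) (C (Suc q)) (generate G (Sq q)) (generate G (Sq (Suc q)))"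
proof -
  have "\<forall>q T. \<exists>T'. finite T \<and> T \<subseteq> carrier G \<longrightarrow> finite T' \<and> T \<subseteq> T' \<and> T' \<subseteq> carrier G \<and>
      (Suc q < n \<longrightarrow> uniform_primitives G (Suc q) (C (Suc q)) (generate G T) (generate G T'))"
  proof (intro allI)
    fix q T
    show "\<exists>T'. finite T \<and> T \<subseteq> carrier G \<longrightarrow> finite T' \<and> T \<subseteq> T' \<and> T' \<subseteq> carrier G \<and>
      (Suc q < n \<longrightarrow> uniform_primitives G (Suc q) (C (Suc q)) (generate G T) (generate G T'))"
    proof (cases "Suc q < n")
      case True
      then show ?thesis
        using assms(1)[of "Suc q"] by auto
    qed blast
  qed
  then obtain next_set where next_set: "\<And>q T. finite T \<Longrightarrow> T \<subseteq> carrier G \<Longrightarrow>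
      finite (next_set q T) \<and> T \<subseteq> next_set q T \<and> next_set q T \<subseteq> carrier G \<and>
      (Suc q < n \<longrightarrow> uniform_primitives G (Suc q) (C (Suc q)) (generate G T) (generate G (next_set q T)))"
    by metis
  define Sq where "Sq = rec_nat S next_set"
  have Sq: "finite (Sq q) \<and> Sq q \<subseteq> carrier G" for q
    by (induction q) (use assms(2,3) next_set in \<open>auto simp: Sq_def\<close>)
  show ?thesis
  proof
    show "Sq 0 = S" by (simp add: Sq_def)
  qed (use Sq next_set in \<open>simp_all add: Sq_def\<close>)
qed

lemma uniformly_acyclic_fg_constants:
  assumes "\<And>q. 1 \<le> q \<Longrightarrow> q < n \<Longrightarrow> uniformly_acyclic_fg G q"
  obtains C where "\<And>q. 0 \<le> C q" and "\<And>q. 1 \<le> q \<Longrightarrow> q < n \<Longrightarrow> \<forall>S. finite S \<and> S \<subseteq> carrier G \<longrightarrow>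
      (\<exists>S'. finite S' \<and> S \<subseteq> S' \<and> S' \<subseteq> carrier G \<and> uniform_primitives G q (C q) (generate G S) (generate G S'))"
proof -
  have "\<exists>C. 1 \<le> q \<and> q < n \<longrightarrow> 0 \<le> C \<and> (\<forall>S. finite S \<and> S \<subseteq> carrier G \<longrightarrow>
    (\<exists>S'. finite S' \<and> S \<subseteq> S' \<and> S' \<subseteq> carrier G \<and> uniform_primitives G q C (generate G S) (generate G S')))" for q
    using assms[of q] unfolding uniformly_acyclic_fg_def by blast
  then obtain C where "\<And>q. 1 \<le> q \<Longrightarrow> q < n \<Longrightarrow> 0 \<le> C q \<and> (\<forall>S. finite S \<and> S \<subseteq> carrier G \<longrightarrow>
    (\<exists>S'. finite S' \<and> S \<subseteq> S' \<and> S' \<subseteq> carrier G \<and> uniform_primitives G q (C q) (generate G S) (generate G S')))"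
    by metis
  then show ?thesis
    by (intro that[of "\<lambda>q. if 1 \<le> q \<and> q < n then C q else 0"]) auto
qed

text \<open>Induction step: a finitely generated subgroup \<open>\<langle>S\<rangle>\<close> is the bottom of a chain of finitely
  generated subgroups along which the lower degrees have uniform primitives, and the top of the
  chain has a pseudo-mitosis.\<close>
lemma uniformly_acyclic_fg_step:
  assumes "group G" "pseudo_mitotic G" "1 \<le> n"
    and "\<And>q. 1 \<le> q \<Longrightarrow> q < n \<Longrightarrow> uniformly_acyclic_fg G q"
  shows "uniformly_acyclic_fg G n"
proof -
  interpret group G by (fact assms(1))
  obtain C where C_nonneg: "\<And>q. 0 \<le> C q" and C: "\<And>q. 1 \<le> q \<Longrightarrow> q < n \<Longrightarrow> \<forall>S. finite S \<and> S \<subseteq> carrier G \<longrightarrow>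
      (\<exists>S'. finite S' \<and> S \<subseteq> S' \<and> S' \<subseteq> carrier G \<and> uniform_primitives G q (C q) (generate G S) (generate G S'))"
    using uniformly_acyclic_fg_constants[OF assms(4)] by blast
  show ?thesis
    unfolding uniformly_acyclic_fg_def
  proof (intro exI[of _ "primitive_bound n C"] conjI allI impI)
    show "0 \<le> primitive_bound n C"
      by (rule primitive_bound_nonneg) (rule C_nonneg)
    fix S assume S: "finite S \<and> S \<subseteq> carrier G"
    obtain Sq where Sq: "Sq 0 = S" "\<And>q. finite (Sq q)" "\<And>q. Sq q \<subseteq> carrier G" "\<And>q. Sq q \<subseteq> Sq (Suc q)"
      and Sq_primitives: "\<And>q. Suc q < n \<Longrightarrow> uniform_primitives G (Suc q) (C (Suc q)) (generate G (Sq q)) (generate G (Sq (Suc q)))"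
      using subgroup_chain[OF C] S by blast
    obtain \<psi>0 \<psi>1 g S' where S': "finite S'" "Sq (n - 1) \<subseteq> S'" "S' \<subseteq> carrier G"
      and mitosis: "mitosis_data G \<psi>1 (generate G (Sq (n - 1))) (generate G S') \<psi>0 g"
      by (rule pseudo_mitosis_data[OF assms(2) Sq(2,3)])
    interpret mitotic_chain G \<psi>1 "generate G (Sq (n - 1))" "generate G S'" \<psi>0 g n "\<lambda>q. generate G (Sq q)" C
    proof (intro mitotic_chain.intro[OF mitosis] mitotic_chain_axioms.intro)
      fix q assume "1 \<le> q" "q \<le> n - 1"
      then show "uniform_primitives G q (C q) (generate G (Sq (q - 1))) (generate G (Sq q))"
        using Sq_primitives[of "q - 1"] assms(3) by simp
    qed (use assms(3) Sq C_nonneg mono_generate[OF Sq(4)] in \<open>auto intro: generate_is_subgroup\<close>)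
    have "S \<subseteq> S'"
      using lift_Suc_mono_le[of Sq 0 "n - 1", OF Sq(4)] S'(2) Sq(1) by simp
    then show "\<exists>S'. finite S' \<and> S \<subseteq> S' \<and> S' \<subseteq> carrier G \<and>
        uniform_primitives G n (primitive_bound n C) (generate G S) (generate G S')"
      using S' uniform_primitives_bottom Sq(1) by auto
  qed
qed

lemma uniformly_acyclic_fg:
  assumes "group G" "pseudo_mitotic G" "1 \<le> n"
  shows "uniformly_acyclic_fg G n"
  using assms(3)
proof (induction n rule: less_induct)
  case (less n)
  then show ?case
    using uniformly_acyclic_fg_step[OF assms(1,2)] by blast
qed

section \<open>From finitely generated subgroups to the whole group\<close>

lemma compact_uniformly_bounded: "compact {u :: 'x \<Rightarrow> real. \<forall>x. u x \<in> {-D..D}}"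
proof -
  have "compactin (product_topology (\<lambda>_. euclidean) UNIV) (PiE UNIV (\<lambda>_ :: 'x. {-D..D :: real}))"
    by (simp add: compactin_PiE)
  moreover have "PiE UNIV (\<lambda>_ :: 'x. {-D..D :: real}) = {u. \<forall>x. u x \<in> {-D..D}}"
    by (auto simp: PiE_UNIV_domain Pi_def)
  ultimately show ?thesis
    by (simp add: euclidean_product_topology)
qed

text \<open>The cluster point exists by Tychonoff's theorem (\<open>compact_uniformly_bounded\<close>).\<close>
lemma uniformly_bounded_cluster_point:
  fixes b :: "'s \<Rightarrow> 'x \<Rightarrow> real"
  assumes "F \<noteq> bot" and "\<And>s x. \<bar>b s x\<bar> \<le> D"
  obtains h where "\<And>x. \<bar>h x\<bar> \<le> D"
    and "\<And>A. closed A \<Longrightarrow> eventually (\<lambda>s. b s \<in> A) F \<Longrightarrow> h \<in> A"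
proof -
  define U where "U = {u :: 'x \<Rightarrow> real. \<forall>x. u x \<in> {-D..D}}"
  have "b s \<in> U" for s
    using assms(2) by (auto simp: U_def abs_le_iff intro: minus_le_iff[THEN iffD1])
  then have "eventually (\<lambda>u. u \<in> U) (filtermap b F)"
    by (simp add: eventually_filtermap)
  moreover have "filtermap b F \<noteq> bot"
    using assms(1) by (simp add: filtermap_bot_iff)
  ultimately obtain h where "h \<in> U" and cluster: "inf (nhds h) (filtermap b F) \<noteq> bot"
    using compact_uniformly_bounded[of D] unfolding compact_filter U_def by blast
  show ?thesis
  proof
    fix x
    have "h x \<in> {-D..D}"
      using \<open>h \<in> U\<close> by (simp add: U_def)
    then show "\<bar>h x\<bar> \<le> D"
      by (auto simp: abs_le_iff)
  next
    fix A assume "closed A" and "eventually (\<lambda>s. b s \<in> A) F"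
    show "h \<in> A"
    proof (rule ccontr)
      assume "h \<notin> A"
      then have "eventually (\<lambda>u. u \<in> - A) (nhds h)"
        using \<open>closed A\<close> by (intro eventually_nhds_in_open) (auto simp: closed_def)
      then have "eventually (\<lambda>u. False) (inf (nhds h) (filtermap b F))"
        using \<open>eventually (\<lambda>s. b s \<in> A) F\<close> unfolding eventually_inf eventually_filtermap
        by (intro exI[of _ "\<lambda>u. u \<in> - A"] exI[of _ "\<lambda>u. u \<in> A"]) auto
      with cluster show False
        by (simp add: eventually_False)
    qed
  qed
qed

lemma (in group) bounded_invariant_primitive_generate:
  assumes "uniform_primitives G n D (generate G S) (generate G S')" "S' \<subseteq> carrier G" "0 \<le> c"
    and abs_f_le: "\<And>xs. xs \<in> tuples G (Suc n) \<Longrightarrow> \<bar>f xs\<bar> \<le> c"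
    and f_invariant: "\<And>g xs. g \<in> carrier G \<Longrightarrow> xs \<in> tuples G (Suc n) \<Longrightarrow> f (map ((\<otimes>) g) xs) = f xs"
    and cocycle: "\<forall>xs\<in>tuples G (Suc (Suc n)). coboundary f xs = 0"
  shows "\<exists>b. bounded_invariant_primitive G n D (generate G S) f c b"
proof -
  have S': "generate G S' \<subseteq> carrier G"
    using assms(2) by (rule generate_incl)
  then have tuples: "xs \<in> lists (generate G S') \<Longrightarrow> xs \<in> tuples G (length xs)" for xs
    by (auto simp: tuples_def)
  have "\<bar>f xs\<bar> \<le> c" if "xs \<in> lists (generate G S')" "length xs = Suc n" for xs
    using tuples[OF that(1)] that(2) by (simp add: abs_f_le)
  moreover have "f (map ((\<otimes>) k) xs) = f xs"
    if "k \<in> generate G S'" "xs \<in> lists (generate G S')" "length xs = Suc n" for k xs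
    using tuples[OF that(2)] that(1,3) S' by (auto intro: f_invariant)
  moreover have "coboundary f xs = 0" if "xs \<in> lists (generate G S')" "length xs = Suc (Suc n)" for xs
    using tuples[OF that(1)] that(2) cocycle by simp
  ultimately show ?thesis
    using assms(1)[unfolded uniform_primitives_def, rule_format, OF \<open>0 \<le> c\<close>] by blast
qed

lemma (in group) bounded_invariant_primitives_fg:
  assumes "uniformly_acyclic_fg G n" and f: "f \<in> Cb G n"
    and cocycle: "\<forall>xs\<in>tuples G (Suc (Suc n)). coboundary f xs = 0"
  obtains D b where "\<And>S xs. \<bar>b S xs\<bar> \<le> D"
    and "\<And>S xs. finite S \<Longrightarrow> S \<subseteq> carrier G \<Longrightarrow> xs \<in> lists (generate G S) \<Longrightarrow> length xs = Suc n \<Longrightarrow>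
      f xs = coboundary (b S) xs"
    and "\<And>S g xs. finite S \<Longrightarrow> S \<subseteq> carrier G \<Longrightarrow> g \<in> generate G S \<Longrightarrow> xs \<in> lists (generate G S) \<Longrightarrow>
      b S (map ((\<otimes>) g) xs) = b S xs"
proof -
  obtain C where C: "\<And>xs. xs \<in> tuples G (Suc n) \<Longrightarrow> \<bar>f xs\<bar> \<le> C"
    using f by (auto simp: Cb_def bounded_cochain_def)
  define c where "c = max C 0"
  have "0 \<le> c" and abs_f_le: "\<And>xs. xs \<in> tuples G (Suc n) \<Longrightarrow> \<bar>f xs\<bar> \<le> c"
    using C by (auto simp: c_def le_max_iff_disj)
  have f_invariant: "\<And>g xs. g \<in> carrier G \<Longrightarrow> xs \<in> tuples G (Suc n) \<Longrightarrow> f (map ((\<otimes>) g) xs) = f xs"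
    using f by (simp add: Cb_def invariant_cochain_def)
  obtain D where "0 \<le> D" and D: "\<forall>S. finite S \<and> S \<subseteq> carrier G \<longrightarrow>
      (\<exists>S'. finite S' \<and> S \<subseteq> S' \<and> S' \<subseteq> carrier G \<and> uniform_primitives G n D (generate G S) (generate G S'))"
    using assms(1) unfolding uniformly_acyclic_fg_def by blast
  have "\<exists>b. bounded_invariant_primitive G n D (generate G S) f c b" if "finite S" "S \<subseteq> carrier G" for S
  proof -
    have "\<exists>S'. finite S' \<and> S \<subseteq> S' \<and> S' \<subseteq> carrier G \<and> uniform_primitives G n D (generate G S) (generate G S')"
      using D that by simp
    then obtain S' where "uniform_primitives G n D (generate G S) (generate G S')" "S' \<subseteq> carrier G"
      by auto
    then show ?thesis
      using \<open>0 \<le> c\<close> abs_f_le f_invariant cocycle by (rule bounded_invariant_primitive_generate)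
  qed
  then obtain b where b: "\<And>S. finite S \<Longrightarrow> S \<subseteq> carrier G \<Longrightarrow> bounded_invariant_primitive G n D (generate G S) f c (b S)"
    by metis
  define b' where "b' S xs = (if finite S \<and> S \<subseteq> carrier G \<and> xs \<in> lists (generate G S) \<and> length xs = n
    then b S xs else 0)" for S xs
  show ?thesis
  proof
    show "\<bar>b' S xs\<bar> \<le> D * c" for S xs
      using b[of S] \<open>0 \<le> D\<close> \<open>0 \<le> c\<close> by (auto simp: b'_def bounded_invariant_primitive_def)
  next
    fix S xs assume S: "finite S" "S \<subseteq> carrier G" and xs: "xs \<in> lists (generate G S)" "length xs = Suc n"
    then have "coboundary (b' S) xs = coboundary (b S) xs"
      by (intro coboundary_cong) (auto simp: b'_def lists_delete_at)
    then show "f xs = coboundary (b' S) xs"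
      using b[OF S] xs by (simp add: bounded_invariant_primitive_def)
  next
    fix S g xs assume S: "finite S" "S \<subseteq> carrier G" and "g \<in> generate G S" "xs \<in> lists (generate G S)"
    moreover from this have "map ((\<otimes>) g) xs \<in> lists (generate G S)"
      by (intro lists_map_mult generate_is_subgroup)
    ultimately show "b' S (map ((\<otimes>) g) xs) = b' S xs"
      using b[OF S] by (simp add: b'_def bounded_invariant_primitive_def)
  qed
qed

lemma (in group) bounded_cohomology_vanishes_if_uniformly_acyclic_fg:
  assumes "uniformly_acyclic_fg G n" and "1 \<le> n"
  shows "bounded_cohomology_vanishes G n"
  unfolding bounded_cohomology_vanishes_def
proof (intro ballI impI)
  fix f assume f: "f \<in> Cb G n" and cocycle: "\<forall>xs\<in>tuples G (Suc (Suc n)). coboundary f xs = 0"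
  obtain D b where bound: "\<And>S xs. \<bar>b S xs\<bar> \<le> D"
    and b_primitive: "\<And>S xs. finite S \<Longrightarrow> S \<subseteq> carrier G \<Longrightarrow> xs \<in> lists (generate G S) \<Longrightarrow>
      length xs = Suc n \<Longrightarrow> f xs = coboundary (b S) xs"
    and b_invariant: "\<And>S g xs. finite S \<Longrightarrow> S \<subseteq> carrier G \<Longrightarrow> g \<in> generate G S \<Longrightarrow>
      xs \<in> lists (generate G S) \<Longrightarrow> b S (map ((\<otimes>) g) xs) = b S xs"
    using bounded_invariant_primitives_fg[OF assms(1) f cocycle] by metis
  obtain h where abs_h_le: "\<And>xs. \<bar>h xs\<bar> \<le> D" and h: "\<And>A. closed A \<Longrightarrow>
      eventually (\<lambda>S. b S \<in> A) (finite_subsets_at_top (carrier G)) \<Longrightarrow> h \<in> A"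
    using uniformly_bounded_cluster_point[of "finite_subsets_at_top (carrier G)" b D, OF _ bound] by auto
  have "f xs = coboundary h xs" if xs: "xs \<in> tuples G (Suc n)" for xs
  proof -
    have "closed {u. f xs = coboundary u xs}"
      by (intro closed_Collect_eq continuous_on_const continuous_on_coboundary)
    moreover have "eventually (\<lambda>S. f xs = coboundary (b S) xs) (finite_subsets_at_top (carrier G))"
      unfolding eventually_finite_subsets_at_top
      using xs by (intro exI[of _ "set xs"]) (auto simp: tuples_def intro!: b_primitive generate.incl)
    ultimately show ?thesis
      using h[of "{u. f xs = coboundary u xs}"] by simp
  qed
  moreover have "h (map ((\<otimes>) g) xs) = h xs" if g: "g \<in> carrier G" and xs: "xs \<in> tuples G n" for g xs
  proof -
    have "closed {u :: 'a list \<Rightarrow> real. u (map ((\<otimes>) g) xs) = u xs}"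
      by (intro closed_Collect_eq continuous_on_product_coordinates)
    moreover have "eventually (\<lambda>S. b S (map ((\<otimes>) g) xs) = b S xs) (finite_subsets_at_top (carrier G))"
      unfolding eventually_finite_subsets_at_top
      using g xs by (intro exI[of _ "insert g (set xs)"]) (auto simp: tuples_def intro!: b_invariant generate.incl)
    ultimately show ?thesis
      using h[of "{u. u (map ((\<otimes>) g) xs) = u xs}"] by simp
  qed
  moreover have "Suc (n - 1) = n"
    using assms(2) by simp
  ultimately show "\<exists>h\<in>Cb G (n - 1). \<forall>xs\<in>tuples G (Suc n). f xs = coboundary h xs"
    using abs_h_le by (intro bexI[of _ h]) (auto simp: Cb_def bounded_cochain_def invariant_cochain_def intro!: exI[of _ D])
qed

theorem theorem3p5:
  fixes G :: "('a, 'b) monoid_scheme"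
  assumes "group G" and "pseudo_mitotic G"
  shows "boundedly_acyclic G"
  unfolding boundedly_acyclic_def
  using assms uniformly_acyclic_fg group.bounded_cohomology_vanishes_if_uniformly_acyclic_fg by blast

end
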